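(* Let $A\in\mathbb{R}^{m\times n}$, $B\in\mathbb{R}^{p\times n}$ with $\mathrm{rank}(B)=p\le n$, $b\in\mathbb{R}^m$, $d\in\mathbb{R}^p$, and suppose the polyhedral convex set $D:=\{x\in\mathbb{R}^n\mid Ax\ge b,\ Bx=d\}$ is nonempty. Fix $x\in\mathbb{R}^n$, and let $I(x)$, $\mathcal{D}(x)$ and $\mathcal{P}(x)$ be as defined in the context. Define \[ P_0:=I_n-[A_{I(x)}^T\ B^T]\left(\begin{bmatrix}A_{I(x)}\\ B\end{bmatrix}[A_{I(x)}^T\ B^T]\right)^{\dagger}\begin{bmatrix}A_{I(x)}\\ B\end{bmatrix}. \] Then $P_0\in\mathcal{P}(x)$.
   Context: $\Pi_D(x)$ denotes the Euclidean projection of $x$ onto $D$, $I_n$ the $n\times n$ identity, $N^\dagger$ the Moore–Penrose pseudo-inverse. For an index set $K\subseteq\{1,\dots,m\}$, $A_K$ is the submatrix of $A$ formed by the rows indexed by $K$, and $A_i$ is the $i$th row of $A$. Define $M(x)$ as the set of $(\lambda,\mu)\in\mathbb{R}^m\times\mathbb{R}^p$ such that $\Pi_D(x)-x+A^T\lambda+B^T\mu=0$, $A\Pi_D(x)-b\ge0$, $B\Pi_D(x)-d=0$, $\lambda\le0$, $\lambda^T(A\Pi_D(x)-b)=0$. Let $I(x):=\{i\in\{1,\dots,m\}\mid A_i\Pi_D(x)=b_i\}$. Let $\mathcal{D}(x)$ be the collection of index sets $K\subseteq\{1,\dots,m\}$ such that there exists $(\lambda,\mu)\in M(x)$ with $\mathrm{supp}(\lambda)\subseteq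 K\subseteq I(x)$ (where $\mathrm{supp}(\lambda)=\{i:\lambda_i\neq0\}$) and $[A_K^T\ B^T]$ has full column rank. Finally \[ \mathcal{P}(x):=\left\{I_n-[A_K^T\ B^T]\left(\begin{bmatrix}A_K\\ B\end{bmatrix}[A_K^T\ B^T]\right)^{-1}\begin{bmatrix}A_K\\ B\end{bmatrix}\ \middle|\ K\in\mathcal{D}(x)\right\}. \] *)

theory Defs
  imports "Jordan_Normal_Form.DL_Rank" "Jordan_Normal_Form.DL_Submatrix"
          "Jordan_Normal_Form.Gauss_Jordan_Elimination"
begin

(* Matrices/vectors are Jordan_Normal_Form 'real mat' / 'real vec'; indices are 0-based,
   so the row index set is {0..<m} instead of {1..m}. *)

definition pinv :: "real mat \<Rightarrow> real mat" where
  "pinv N = (THE X. X \<in> carrier_mat (dim_col N) (dim_row N) \<and>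
                   N * X * N = N \<and> X * N * X = X \<and>
                   transpose_mat (N * X) = N * X \<and> transpose_mat (X * N) = X * N)"

definition full_col_rank :: "real mat \<Rightarrow> bool" where
  "full_col_rank N \<longleftrightarrow> vec_space.rank (dim_row N) N = dim_col N"

definition polyD :: "nat \<Rightarrow> real mat \<Rightarrow> real vec \<Rightarrow> real mat \<Rightarrow> real vec \<Rightarrow> real vec set" where
  "polyD n A b B d = {y \<in> carrier_vec n. (\<forall>i<dim_row A. (A *\<^sub>v y) $ i \<ge> b $ i) \<and> B *\<^sub>v y = d}"

definition eproj :: "real vec set \<Rightarrow> real vec \<Rightarrow> real vec" where
  "eproj S x = (THE y. y \<in> S \<and> (\<forall>z\<in>S. (x - y) \<bullet> (x - y) \<le> (x - z) \<bullet> (x - z)))"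

definition rowsub :: "real mat \<Rightarrow> nat set \<Rightarrow> real mat" where
  "rowsub A K = submatrix A K UNIV"

definition multM :: "nat \<Rightarrow> real mat \<Rightarrow> real vec \<Rightarrow> real mat \<Rightarrow> real vec \<Rightarrow> real vec
                     \<Rightarrow> (real vec \<times> real vec) set" where
  "multM n A b B d x = (let y = eproj (polyD n A b B d) x in
     {(lam, mu). lam \<in> carrier_vec (dim_row A) \<and> mu \<in> carrier_vec (dim_row B) \<and>
        y - x + transpose_mat A *\<^sub>v lam + transpose_mat B *\<^sub>v mu = 0\<^sub>v n \<and>
        (\<forall>i<dim_row A. (A *\<^sub>v y) $ i \<ge> b $ i) \<and>
        B *\<^sub>v y = d \<and>
        (\<forall>i<dim_row A. lam $ i \<le> 0) \<and>
        lam \<bullet> (A *\<^sub>v y - b) = 0})"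

definition actI :: "nat \<Rightarrow> real mat \<Rightarrow> real vec \<Rightarrow> real mat \<Rightarrow> real vec \<Rightarrow> real vec \<Rightarrow> nat set" where
  "actI n A b B d x = {i. i < dim_row A \<and> row A i \<bullet> eproj (polyD n A b B d) x = b $ i}"

definition supp_vec :: "real vec \<Rightarrow> nat set" where
  "supp_vec v = {i. i < dim_vec v \<and> v $ i \<noteq> 0}"

definition idxD :: "nat \<Rightarrow> real mat \<Rightarrow> real vec \<Rightarrow> real mat \<Rightarrow> real vec \<Rightarrow> real vec \<Rightarrow> nat set set" where
  "idxD n A b B d x = {K. K \<subseteq> {0..<dim_row A} \<and>
      (\<exists>(lam, mu) \<in> multM n A b B d x. supp_vec lam \<subseteq> K \<and> K \<subseteq> actI n A b B d x) \<and>
      full_col_rank (transpose_mat (rowsub A K @\<^sub>r B))}"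

definition projP :: "nat \<Rightarrow> real mat \<Rightarrow> real vec \<Rightarrow> real mat \<Rightarrow> real vec \<Rightarrow> real vec \<Rightarrow> real mat set" where
  "projP n A b B d x = {1\<^sub>m n - transpose_mat (rowsub A K @\<^sub>r B)
          * the (mat_inverse ((rowsub A K @\<^sub>r B) * transpose_mat (rowsub A K @\<^sub>r B)))
          * (rowsub A K @\<^sub>r B) | K. K \<in> idxD n A b B d x}"

end

theory Submission
  imports Defs
begin

text \<open>The projection \<open>y\<close> of \<open>x\<close> onto \<open>D\<close> is characterised by KKT multipliers, which are
  constructed by induction on the number of constraints. A Caratheodory-type elimination makes
  the gradients of the constraints with nonzero multiplier, together with the rows of \<open>B\<close>,
  linearly independent, and inside the active set \<open>I(x)\<close> this family extends to a set \<open>K\<close> whose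
  rows, together with those of \<open>B\<close>, form a basis of the row space of \<open>[A_I(x); B]\<close>. Hence
  \<open>K\<close> lies in the collection \<open>D(x)\<close>, and since \<open>[A_K; B]\<close> and \<open>[A_I(x); B]\<close> have the same row
  space, \<open>P_0\<close> and the matrix of \<open>P(x)\<close> built from \<open>K\<close> are both the orthogonal projector onto
  their common null space.\<close>

section \<open>Linear combinations of indexed families of vectors\<close>

text \<open>Combinations are taken over index sets rather than over sets of vectors (as
  \<open>vec_space.lincomb\<close> does), since different constraints may have equal gradients.\<close>

definition lin_comb :: "nat \<Rightarrow> (nat \<Rightarrow> real vec) \<Rightarrow> (nat \<Rightarrow> real) \<Rightarrow> nat set \<Rightarrow> real vec" where
  "lin_comb n a c S = vec n (\<lambda>j. \<Sum>i\<in>S. c i * a i $ j)"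

lemma lin_comb_carrier [simp]: "lin_comb n a c S \<in> carrier_vec n"
  unfolding lin_comb_def by simp

lemma lin_comb_dim [simp]: "dim_vec (lin_comb n a c S) = n"
  unfolding lin_comb_def by simp

lemma lin_comb_index: "j < n \<Longrightarrow> lin_comb n a c S $ j = (\<Sum>i\<in>S. c i * a i $ j)"
  unfolding lin_comb_def by simp

lemma carrier_vec_eqI:
  "v \<in> carrier_vec n \<Longrightarrow> w \<in> carrier_vec n \<Longrightarrow> (\<And>j. j < n \<Longrightarrow> v $ j = w $ j) \<Longrightarrow> v = w"
  by (rule eq_vecI) auto

lemma lin_comb_scalar_prod:
  assumes "finite S" "\<forall>i\<in>S. a i \<in> carrier_vec n" "y \<in> carrier_vec n"
  shows "lin_comb n a c S \<bullet> y = (\<Sum>i\<in>S. c i * (a i \<bullet> y))"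
proof -
  have "lin_comb n a c S \<bullet> y = (\<Sum>j\<in>{0..<n}. (\<Sum>i\<in>S. c i * a i $ j) * y $ j)"
    unfolding scalar_prod_def lin_comb_def using assms(3) by auto
  also have "\<dots> = (\<Sum>j\<in>{0..<n}. \<Sum>i\<in>S. c i * (a i $ j * y $ j))"
    by (simp add: sum_distrib_right mult.assoc)
  also have "\<dots> = (\<Sum>i\<in>S. \<Sum>j\<in>{0..<n}. c i * (a i $ j * y $ j))"
    by (rule sum.swap)
  also have "\<dots> = (\<Sum>i\<in>S. c i * (a i \<bullet> y))"
    unfolding scalar_prod_def sum_distrib_left using assms(2,3) by auto
  finally show ?thesis .
qed

lemma lin_comb_add: "lin_comb n a c S + lin_comb n a e S = lin_comb n a (\<lambda>i. c i + e i) S"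
  unfolding lin_comb_def by (rule eq_vecI) (auto simp: sum.distrib distrib_right)

lemma lin_comb_smult: "t \<cdot>\<^sub>v lin_comb n a c S = lin_comb n a (\<lambda>i. t * c i) S"
  unfolding lin_comb_def by (rule eq_vecI) (auto simp: sum_distrib_left mult.assoc)

lemma lin_comb_cong: "(\<And>i. i \<in> S \<Longrightarrow> c i = e i) \<Longrightarrow> lin_comb n a c S = lin_comb n a e S"
  unfolding lin_comb_def by (rule eq_vecI) auto

lemma lin_comb_mono_neutral:
  "finite S \<Longrightarrow> T \<subseteq> S \<Longrightarrow> (\<And>i. i \<in> S - T \<Longrightarrow> c i = 0) \<Longrightarrow> lin_comb n a c S = lin_comb n a c T"
  unfolding lin_comb_def by (rule eq_vecI) (auto intro!: sum.mono_neutral_right)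

lemma lin_comb_union:
  "finite S \<Longrightarrow> finite T \<Longrightarrow> S \<inter> T = {} \<Longrightarrow>
    lin_comb n a c (S \<union> T) = lin_comb n a c S + lin_comb n a c T"
  unfolding lin_comb_def by (rule eq_vecI) (auto simp: sum.union_disjoint)

lemma lin_comb_insert:
  "finite S \<Longrightarrow> k \<notin> S \<Longrightarrow> a k \<in> carrier_vec n \<Longrightarrow>
    lin_comb n a c (insert k S) = c k \<cdot>\<^sub>v a k + lin_comb n a c S"
  unfolding lin_comb_def by (rule eq_vecI) auto

lemma lin_comb_delta:
  assumes "finite S" "i \<in> S" "a i \<in> carrier_vec n"
  shows "lin_comb n a (\<lambda>j. if j = i then 1 else 0) S = a i"
proof (rule carrier_vec_eqI[of _ n])
  fix l assume l: "l < n"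
  have "(\<Sum>j\<in>S. (if j = i then 1 else 0) * a j $ l) = (\<Sum>j\<in>S. if j = i then a j $ l else 0)"
    by (rule sum.cong) auto
  also have "\<dots> = a i $ l" using assms by simp
  finally show "lin_comb n a (\<lambda>j. if j = i then 1 else 0) S $ l = a i $ l"
    unfolding lin_comb_index[OF l] .
qed (use assms in auto)

lemma lin_comb_add_null:
  assumes "lin_comb n a e S = 0\<^sub>v n"
  shows "lin_comb n a (\<lambda>i. c i + t * e i) S = lin_comb n a c S"
proof -
  have "lin_comb n a (\<lambda>i. c i + t * e i) S = lin_comb n a c S + t \<cdot>\<^sub>v lin_comb n a e S"
    by (simp add: lin_comb_add lin_comb_smult)
  also have "t \<cdot>\<^sub>v lin_comb n a e S = 0\<^sub>v n" using assms by auto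
  finally show ?thesis by simp
qed

lemma scalar_prod_self_nonneg: "0 \<le> (v::real vec) \<bullet> v"
  using conjugate_square_ge_0_vec[of v] by simp

lemma scalar_prod_self_eq_0: "v \<in> carrier_vec n \<Longrightarrow> (v::real vec) \<bullet> v = 0 \<longleftrightarrow> v = 0\<^sub>v n"
  using conjugate_square_eq_0_vec[of v n] by simp

lemma scalar_prod_diff_sum:
  assumes "x \<in> carrier_vec n" "y \<in> carrier_vec n" "z \<in> carrier_vec n"
  shows "(x - z) \<bullet> (y - z) + (x - y) \<bullet> (z - y) = ((y - z) \<bullet> (y - z) :: real)"
proof -
  have "(x - z) \<bullet> (y - z) + (x - y) \<bullet> (z - y) =
    (\<Sum>j\<in>{0..<n}. (x$j - z$j) * (y$j - z$j) + (x$j - y$j) * (z$j - y$j))"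
    using assms unfolding scalar_prod_def by (simp add: sum.distrib)
  also have "\<dots> = (\<Sum>j\<in>{0..<n}. (y$j - z$j) * (y$j - z$j))"
    by (rule sum.cong) (auto simp: algebra_simps)
  also have "\<dots> = (y - z) \<bullet> (y - z)" using assms unfolding scalar_prod_def by simp
  finally show ?thesis .
qed

lemma scalar_prod_diff_expand:
  assumes "x \<in> carrier_vec n" "y \<in> carrier_vec n" "z \<in> carrier_vec n"
  shows "(x - z) \<bullet> (x - z) = (x - y) \<bullet> (x - y) + (y - z) \<bullet> (y - z) - 2 * ((x - y) \<bullet> (z - y) :: real)"
proof -
  have "(x - z) \<bullet> (x - z) = (\<Sum>j\<in>{0..<n}. (x$j - z$j) * (x$j - z$j))"
    using assms unfolding scalar_prod_def by simp
  also have "\<dots> = (\<Sum>j\<in>{0..<n}. (x$j - y$j) * (x$j - y$j) + (y$j - z$j) * (y$j - z$j)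
                                - 2 * ((x$j - y$j) * (z$j - y$j)))"
    by (rule sum.cong) (auto simp: algebra_simps)
  also have "\<dots> = (x - y) \<bullet> (x - y) + (y - z) \<bullet> (y - z) - 2 * ((x - y) \<bullet> (z - y))"
    using assms unfolding scalar_prod_def by (simp add: sum.distrib sum_subtractf sum_distrib_left)
  finally show ?thesis .
qed


section \<open>Projection onto a polyhedron via KKT points\<close>

definition feasible ::
  "nat \<Rightarrow> (nat \<Rightarrow> real vec) \<Rightarrow> (nat \<Rightarrow> real) \<Rightarrow> nat set \<Rightarrow> nat set \<Rightarrow> real vec \<Rightarrow> bool" where
  "feasible n a \<beta> Ineq Eq y \<longleftrightarrow>
     y \<in> carrier_vec n \<and> (\<forall>i\<in>Ineq. \<beta> i \<le> a i \<bullet> y) \<and> (\<forall>i\<in>Eq. a i \<bullet> y = \<beta> i)"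

definition kkt_point :: "nat \<Rightarrow> (nat \<Rightarrow> real vec) \<Rightarrow> (nat \<Rightarrow> real) \<Rightarrow> nat set \<Rightarrow> nat set
    \<Rightarrow> real vec \<Rightarrow> real vec \<Rightarrow> (nat \<Rightarrow> real) \<Rightarrow> bool" where
  "kkt_point n a \<beta> Ineq Eq x y c \<longleftrightarrow>
     feasible n a \<beta> Ineq Eq y \<and> x - y = lin_comb n a c (Ineq \<union> Eq) \<and>
     (\<forall>i\<in>Ineq - Eq. c i \<le> 0 \<and> (c i \<noteq> 0 \<longrightarrow> a i \<bullet> y = \<beta> i))"

lemma kkt_point_scalar_prod:
  assumes "finite Ineq" "finite Eq" "\<forall>i. a i \<in> carrier_vec n"
    and "kkt_point n a \<beta> Ineq Eq x y c" "w \<in> carrier_vec n"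
  shows "(x - y) \<bullet> w = (\<Sum>i\<in>Ineq \<union> Eq. c i * (a i \<bullet> w))"
  using assms lin_comb_scalar_prod[of "Ineq \<union> Eq" a n w c] unfolding kkt_point_def by auto

lemma kkt_point_variational_ineq:
  assumes fin: "finite Ineq" "finite Eq" and ac: "\<forall>i. a i \<in> carrier_vec n"
    and k: "kkt_point n a \<beta> Ineq Eq x y c" and z: "feasible n a \<beta> Ineq Eq z"
  shows "(x - y) \<bullet> (z - y) \<le> 0"
proof -
  have y: "y \<in> carrier_vec n" and z': "z \<in> carrier_vec n"
    using k z unfolding kkt_point_def feasible_def by auto
  have "(x - y) \<bullet> (z - y) = (\<Sum>i\<in>Ineq \<union> Eq. c i * (a i \<bullet> (z - y)))"
    using kkt_point_scalar_prod[OF fin ac k] y z' by simp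
  also have "\<dots> \<le> 0"
  proof (rule sum_nonpos)
    fix i assume i: "i \<in> Ineq \<union> Eq"
    have e: "a i \<bullet> (z - y) = a i \<bullet> z - a i \<bullet> y"
      using ac y z' scalar_prod_minus_distrib[of "a i" n z y] by auto
    show "c i * (a i \<bullet> (z - y)) \<le> 0"
    proof (cases "i \<in> Eq")
      case True then show ?thesis using k z e unfolding kkt_point_def feasible_def by auto
    next
      case False
      then have "c i \<le> 0" "c i \<noteq> 0 \<longrightarrow> a i \<bullet> y = \<beta> i" "\<beta> i \<le> a i \<bullet> z"
        using i k z unfolding kkt_point_def feasible_def by auto
      then show ?thesis using e by (cases "c i = 0") (auto simp: mult_nonpos_nonneg)
    qed
  qed
  finally show ?thesis .
qed

lemma eproj_kkt_point:
  assumes fin: "finite Ineq" "finite Eq" and ac: "\<forall>i. a i \<in> carrier_vec n" and x: "x \<in> carrier_vec n"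
    and k: "kkt_point n a \<beta> Ineq Eq x y c"
  shows "eproj {z. feasible n a \<beta> Ineq Eq z} x = y"
  unfolding eproj_def
proof (rule the_equality)
  have y: "y \<in> carrier_vec n" using k unfolding kkt_point_def feasible_def by auto
  have pythagoras: "(x - y) \<bullet> (x - y) + (y - z) \<bullet> (y - z) \<le> (x - z) \<bullet> (x - z)"
    if "feasible n a \<beta> Ineq Eq z" for z
  proof -
    have "z \<in> carrier_vec n" using that unfolding feasible_def by auto
    then show ?thesis
      using scalar_prod_diff_expand[OF x y, of z] kkt_point_variational_ineq[OF fin ac k that] by linarith
  qed
  show "y \<in> {z. feasible n a \<beta> Ineq Eq z} \<and>
      (\<forall>z\<in>{z. feasible n a \<beta> Ineq Eq z}. (x - y) \<bullet> (x - y) \<le> (x - z) \<bullet> (x - z))"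
    using k pythagoras scalar_prod_self_nonneg unfolding kkt_point_def
    by (smt (verit, best) mem_Collect_eq)
  fix z assume "z \<in> {z. feasible n a \<beta> Ineq Eq z} \<and>
      (\<forall>w\<in>{z. feasible n a \<beta> Ineq Eq z}. (x - z) \<bullet> (x - z) \<le> (x - w) \<bullet> (x - w))"
  then have fz: "feasible n a \<beta> Ineq Eq z" and le: "(x - z) \<bullet> (x - z) \<le> (x - y) \<bullet> (x - y)"
    using k unfolding kkt_point_def by auto
  have z: "z \<in> carrier_vec n" using fz unfolding feasible_def by auto
  have "(y - z) \<bullet> (y - z) = 0" using pythagoras[OF fz] le scalar_prod_self_nonneg[of "y - z"] by linarith
  then have "y - z = 0\<^sub>v n" using scalar_prod_self_eq_0[of "y - z" n] y z by auto
  then show "z = y" using y z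
    by (metis minus_cancel_vec right_zero_vec carrier_vecD eq_vecI index_minus_vec(1)
        index_zero_vec(1) eq_iff_diff_eq_0)
qed

lemma kkt_point_add_constraints:
  assumes k: "kkt_point n a \<beta> Ineq Eq x y c" and feas: "feasible n a \<beta> Ineq' Eq' y"
    and sub: "Ineq \<subseteq> Ineq'" "Eq \<subseteq> Eq'" and fin: "finite (Ineq' \<union> Eq')"
  shows "kkt_point n a \<beta> Ineq' Eq' x y (\<lambda>i. if i \<in> Ineq \<union> Eq then c i else 0)"
proof -
  have "lin_comb n a (\<lambda>i. if i \<in> Ineq \<union> Eq then c i else 0) (Ineq' \<union> Eq')
      = lin_comb n a (\<lambda>i. if i \<in> Ineq \<union> Eq then c i else 0) (Ineq \<union> Eq)"
    by (rule lin_comb_mono_neutral) (use fin sub in auto)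
  also have "\<dots> = lin_comb n a c (Ineq \<union> Eq)" by (rule lin_comb_cong) simp
  finally show ?thesis using k feas sub unfolding kkt_point_def by auto
qed

text \<open>Moving along \<open>v\<close>, which is orthogonal to every \<open>a i\<close> with \<open>i \<in> F\<close> but not to \<open>a k\<close>,
  reaches the hyperplane of constraint \<open>k\<close> without leaving those of \<open>F\<close>.\<close>

lemma kkt_point_shift_orthogonal:
  assumes fin: "finite F" and kF: "k \<notin> F" and ac: "\<forall>i. a i \<in> carrier_vec n"
    and x: "x \<in> carrier_vec n" and k1: "kkt_point n a \<beta> {} F x y1 c1"
    and v: "v \<in> carrier_vec n" and avF: "\<forall>i\<in>F. a i \<bullet> v = 0" and akv: "a k = v + lin_comb n a e F"
    and vv: "v \<bullet> v > 0"
  shows "\<exists>y c. kkt_point n a \<beta> {} (insert k F) x y c"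
proof -
  have y1: "y1 \<in> carrier_vec n" and y1F: "\<forall>i\<in>F. a i \<bullet> y1 = \<beta> i"
    and xy1: "x - y1 = lin_comb n a c1 F"
    using k1 unfolding kkt_point_def feasible_def by auto
  have "a k \<bullet> v = v \<bullet> v + lin_comb n a e F \<bullet> v"
    unfolding akv using v by (simp add: add_scalar_prod_distrib[of _ n])
  also have "lin_comb n a e F \<bullet> v = 0"
    using lin_comb_scalar_prod[of F a n v e] fin ac v avF by auto
  finally have akvv: "a k \<bullet> v = v \<bullet> v" by simp
  define t where "t = (\<beta> k - a k \<bullet> y1) / (v \<bullet> v)"
  define y where "y = y1 + t \<cdot>\<^sub>v v"
  define c where "c = (\<lambda>i. if i = k then - t else c1 i + t * e i)"
  have y: "y \<in> carrier_vec n" using y1 v y_def by auto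
  have ay: "a i \<bullet> y = a i \<bullet> y1 + t * (a i \<bullet> v)" for i
    unfolding y_def using ac y1 v by (simp add: scalar_prod_add_distrib[of _ n])
  have fy: "feasible n a \<beta> {} (insert k F) y"
    unfolding feasible_def using y ay y1F avF akvv vv unfolding t_def by auto
  have "x - y = lin_comb n a c (insert k F)"
  proof (rule carrier_vec_eqI[of _ n])
    fix j assume j: "j < n"
    have "lin_comb n a c F $ j = (\<Sum>i\<in>F. c1 i * a i $ j + t * (e i * a i $ j))"
      unfolding lin_comb_index[OF j] by (rule sum.cong) (use kF in \<open>auto simp: c_def algebra_simps\<close>)
    also have "\<dots> = lin_comb n a c1 F $ j + t * lin_comb n a e F $ j"
      unfolding lin_comb_index[OF j] by (simp add: sum.distrib sum_distrib_left)
    also have "\<dots> = (x $ j - y1 $ j) + t * (a k $ j - v $ j)"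
      using arg_cong[OF xy1, of "\<lambda>w. w $ j"] arg_cong[OF akv, of "\<lambda>w. w $ j"] x y1 v j by simp
    finally have "lin_comb n a c F $ j = (x $ j - y1 $ j) + t * (a k $ j - v $ j)" .
    moreover have "(x - y) $ j = (x $ j - y1 $ j) - t * v $ j" using j x y1 v by (simp add: y_def)
    moreover have "lin_comb n a c (insert k F) $ j = - t * a k $ j + lin_comb n a c F $ j"
      using j ac[rule_format, of k] by (simp add: lin_comb_insert[OF fin kF] c_def)
    ultimately show "(x - y) $ j = lin_comb n a c (insert k F) $ j" by (simp add: algebra_simps)
  qed (use x y in auto)
  then show ?thesis using fy unfolding kkt_point_def by auto
qed

text \<open>Here \<open>u\<close> is the projection of \<open>q + a k\<close> onto the affine set of \<open>F\<close>, so \<open>u - q\<close> is the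
  component of \<open>a k\<close> orthogonal to the \<open>a i\<close>, \<open>i \<in> F\<close>. If it vanishes, \<open>a k\<close> is a combination
  of them and constraint \<open>k\<close> is implied by the others.\<close>

lemma kkt_point_insert_equality:
  assumes fin: "finite F" and kF: "k \<notin> F" and ac: "\<forall>i. a i \<in> carrier_vec n"
    and x: "x \<in> carrier_vec n" and fq: "feasible n a \<beta> {} (insert k F) q"
    and k1: "kkt_point n a \<beta> {} F x y1 c1" and k2: "kkt_point n a \<beta> {} F (q + a k) u e"
  shows "\<exists>y c. kkt_point n a \<beta> {} (insert k F) x y c"
proof -
  have q: "q \<in> carrier_vec n" and qk: "a k \<bullet> q = \<beta> k" and qF: "\<forall>i\<in>F. a i \<bullet> q = \<beta> i"
    using fq unfolding feasible_def by auto
  have y1: "y1 \<in> carrier_vec n" and u: "u \<in> carrier_vec n"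
    and y1F: "\<forall>i\<in>F. a i \<bullet> y1 = \<beta> i" and uF: "\<forall>i\<in>F. a i \<bullet> u = \<beta> i"
    and qu: "q + a k - u = lin_comb n a e F"
    using k1 k2 unfolding kkt_point_def feasible_def by auto
  define v where "v = u - q"
  have v: "v \<in> carrier_vec n" using u q v_def by auto
  have avF: "\<forall>i\<in>F. a i \<bullet> v = 0"
    using uF qF ac u q unfolding v_def by (auto simp: scalar_prod_minus_distrib[of _ n])
  have akv: "a k = v + lin_comb n a e F"
  proof (rule carrier_vec_eqI[of _ n])
    fix j assume "j < n"
    then show "a k $ j = (v + lin_comb n a e F) $ j"
      using arg_cong[OF qu, of "\<lambda>w. w $ j"] q u ac[rule_format, of k] unfolding v_def by auto
  qed (use ac v in auto)
  show ?thesis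
  proof (cases "v = 0\<^sub>v n")
    case True
    then have ak: "a k = lin_comb n a e F" using akv ac by auto
    have "a k \<bullet> y1 = (\<Sum>i\<in>F. e i * \<beta> i)" and "a k \<bullet> q = (\<Sum>i\<in>F. e i * \<beta> i)"
      using lin_comb_scalar_prod[of F a n _ e] fin ac y1 y1F q qF ak by auto
    then have "feasible n a \<beta> {} (insert k F) y1" using y1 y1F qk unfolding feasible_def by auto
    then show ?thesis using kkt_point_add_constraints[OF k1] fin by blast
  next
    case False
    then have "v \<bullet> v > 0"
      using scalar_prod_self_nonneg[of v] scalar_prod_self_eq_0[OF v] by linarith
    then show ?thesis by (rule kkt_point_shift_orthogonal[OF fin kF ac x k1 v avF akv])
  qed
qed

lemma exists_kkt_point_equalities:
  assumes "finite Eq" and ac: "\<forall>i. a i \<in> carrier_vec n" and "x \<in> carrier_vec n"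
    and "feasible n a \<beta> {} Eq q"
  shows "\<exists>y c. kkt_point n a \<beta> {} Eq x y c"
  using assms(1,3,4)
proof (induct Eq arbitrary: x rule: finite_induct)
  case empty
  show ?case
    by (rule exI[of _ x], rule exI[of _ "\<lambda>_. 0"])
      (use empty in \<open>auto simp: kkt_point_def feasible_def lin_comb_def\<close>)
next
  case (insert k F)
  have q: "q \<in> carrier_vec n" and fq: "feasible n a \<beta> {} F q"
    using insert(5) unfolding feasible_def by auto
  have qa: "q + a k \<in> carrier_vec n" using q ac by auto
  obtain y1 c1 where k1: "kkt_point n a \<beta> {} F x y1 c1" using insert(3)[OF insert(4) fq] by blast
  obtain u e where k2: "kkt_point n a \<beta> {} F (q + a k) u e" using insert(3)[OF qa fq] by blast
  show ?case by (rule kkt_point_insert_equality[OF insert(1,2) ac insert(4,5) k1 k2])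
qed

lemma feasible_segment_point:
  assumes fy: "feasible n a \<beta> F Eq y" and fq: "feasible n a \<beta> (insert k F) Eq q"
    and ac: "\<forall>i. a i \<in> carrier_vec n" and lt: "a k \<bullet> y < \<beta> k"
  shows "\<exists>w. feasible n a \<beta> F (insert k Eq) w"
proof -
  have y: "y \<in> carrier_vec n" and q: "q \<in> carrier_vec n" and qk: "\<beta> k \<le> a k \<bullet> q"
    using fy fq unfolding feasible_def by auto
  define s where "s = (\<beta> k - a k \<bullet> y) / (a k \<bullet> q - a k \<bullet> y)"
  have s01: "0 < s" "s \<le> 1" using lt qk unfolding s_def by (auto simp: field_simps)
  define w where "w = y + s \<cdot>\<^sub>v (q - y)"
  have aw: "a i \<bullet> w = (1 - s) * (a i \<bullet> y) + s * (a i \<bullet> q)" for i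
    unfolding w_def using ac y q
    by (simp add: scalar_prod_add_distrib[of _ n] scalar_prod_minus_distrib[of _ n] algebra_simps)
  have "feasible n a \<beta> F (insert k Eq) w"
    unfolding feasible_def
  proof (intro conjI ballI)
    show "w \<in> carrier_vec n" using y q w_def by auto
    fix i assume "i \<in> F"
    then have "\<beta> i \<le> a i \<bullet> y" "\<beta> i \<le> a i \<bullet> q" using fy fq unfolding feasible_def by auto
    then have "(1 - s) * \<beta> i \<le> (1 - s) * (a i \<bullet> y)" "s * \<beta> i \<le> s * (a i \<bullet> q)"
      using s01 by (auto intro: mult_left_mono)
    then show "\<beta> i \<le> a i \<bullet> w" unfolding aw by (simp add: algebra_simps)
  next
    fix i assume "i \<in> insert k Eq"
    then show "a i \<bullet> w = \<beta> i"
    proof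
      assume "i = k"
      have "s * (a k \<bullet> q - a k \<bullet> y) = \<beta> k - a k \<bullet> y" using lt qk unfolding s_def by simp
      then show ?thesis unfolding \<open>i = k\<close> aw by (simp add: algebra_simps)
    next
      assume "i \<in> Eq"
      then have "a i \<bullet> y = \<beta> i" "a i \<bullet> q = \<beta> i" using fy fq unfolding feasible_def by auto
      then show ?thesis unfolding aw by (simp add: algebra_simps)
    qed
  qed
  then show ?thesis ..
qed

text \<open>If \<open>c'' k > 0\<close>, the KKT conditions at \<open>y''\<close> make \<open>(x - y'') \<bullet> (y' - y'')\<close> negative, and
  together with the variational inequality at \<open>y'\<close> this gives \<open>|y' - y''|\<^sup>2 < 0\<close>.\<close>

lemma kkt_multiplier_nonpos_of_violated:
  assumes fin: "finite F" "finite Eq" and ac: "\<forall>i. a i \<in> carrier_vec n" and x: "x \<in> carrier_vec n"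
    and k1: "kkt_point n a \<beta> F Eq x y' c'" and k2: "kkt_point n a \<beta> F (insert k Eq) x y'' c''"
    and lt: "a k \<bullet> y' < \<beta> k"
  shows "c'' k \<le> 0"
proof (rule ccontr)
  assume pos: "\<not> c'' k \<le> 0"
  have y': "y' \<in> carrier_vec n" and y'': "y'' \<in> carrier_vec n"
    using k1 k2 unfolding kkt_point_def feasible_def by auto
  have fin': "finite (F \<union> insert k Eq)" using fin by auto
  have diff: "a i \<bullet> (y' - y'') = a i \<bullet> y' - a i \<bullet> y''" for i
    using ac y' y'' by (simp add: scalar_prod_minus_distrib[of _ n])
  have "(x - y'') \<bullet> (y' - y'') = (\<Sum>i\<in>F \<union> insert k Eq. c'' i * (a i \<bullet> (y' - y'')))"
    using kkt_point_scalar_prod[OF fin(1) _ ac k2] fin y' y'' by simp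
  also have "\<dots> = c'' k * (a k \<bullet> (y' - y''))
      + (\<Sum>i\<in>(F \<union> insert k Eq) - {k}. c'' i * (a i \<bullet> (y' - y'')))"
    by (subst sum.remove[OF fin', of k]) auto
  also have "\<dots> < 0"
  proof -
    have "a k \<bullet> y'' = \<beta> k" using k2 unfolding kkt_point_def feasible_def by auto
    then have "c'' k * (a k \<bullet> (y' - y'')) < 0" using pos lt diff by (simp add: mult_pos_neg)
    moreover have "(\<Sum>i\<in>(F \<union> insert k Eq) - {k}. c'' i * (a i \<bullet> (y' - y''))) \<le> 0"
    proof (rule sum_nonpos)
      fix i assume i: "i \<in> F \<union> insert k Eq - {k}"
      show "c'' i * (a i \<bullet> (y' - y'')) \<le> 0"
      proof (cases "i \<in> Eq")
        case True
        then show ?thesis using k1 k2 diff unfolding kkt_point_def feasible_def by auto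
      next
        case False
        then have "c'' i \<le> 0" "c'' i \<noteq> 0 \<longrightarrow> a i \<bullet> y'' = \<beta> i" "\<beta> i \<le> a i \<bullet> y'"
          using i k1 k2 unfolding kkt_point_def feasible_def by auto
        then show ?thesis using diff by (cases "c'' i = 0") (auto simp: mult_nonpos_nonneg)
      qed
    qed
    ultimately show ?thesis by linarith
  qed
  finally have "(x - y'') \<bullet> (y' - y'') < 0" .
  moreover have "feasible n a \<beta> F Eq y''" using k2 unfolding kkt_point_def feasible_def by auto
  then have "(x - y') \<bullet> (y'' - y') \<le> 0" using kkt_point_variational_ineq[OF fin ac k1] by blast
  ultimately show False
    using scalar_prod_diff_sum[OF x y' y''] scalar_prod_self_nonneg[of "y' - y''"] by linarith
qed

text \<open>Induction on the inequality constraints: if the KKT point \<open>y'\<close> without constraint \<open>k\<close>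
  violates it, the KKT point with \<open>k\<close> imposed as an equality also satisfies the KKT conditions
  with \<open>k\<close> as an inequality, since its multiplier has the right sign.\<close>

lemma exists_kkt_point:
  assumes "finite Ineq" "finite Eq" and ac: "\<forall>i. a i \<in> carrier_vec n" and x: "x \<in> carrier_vec n"
    and "feasible n a \<beta> Ineq Eq q"
  shows "\<exists>y c. kkt_point n a \<beta> Ineq Eq x y c"
  using assms(1,2,5)
proof (induct Ineq arbitrary: Eq q rule: finite_induct)
  case empty
  then show ?case using exists_kkt_point_equalities[of Eq a n x \<beta> q] ac x by auto
next
  case (insert k F)
  have fq: "feasible n a \<beta> F Eq q" using insert(5) unfolding feasible_def by auto
  obtain y' c' where k1: "kkt_point n a \<beta> F Eq x y' c'" using insert(3)[OF insert(4) fq] by blast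
  show ?case
  proof (cases "\<beta> k \<le> a k \<bullet> y'")
    case True
    then have "feasible n a \<beta> (insert k F) Eq y'" using k1 unfolding kkt_point_def feasible_def by auto
    then show ?thesis using kkt_point_add_constraints[OF k1] insert(1,4) by blast
  next
    case False
    then obtain w where "feasible n a \<beta> F (insert k Eq) w"
      using feasible_segment_point[OF _ insert(5) ac] k1 unfolding kkt_point_def by force
    then obtain y'' c'' where k2: "kkt_point n a \<beta> F (insert k Eq) x y'' c''"
      using insert(3) insert(4) by blast
    have "c'' k \<le> 0"
      using kkt_multiplier_nonpos_of_violated[OF insert(1,4) ac x k1 k2] False by simp
    moreover have "insert k F \<union> Eq = F \<union> insert k Eq" by auto
    ultimately have "kkt_point n a \<beta> (insert k F) Eq x y'' c''"
      using k2 unfolding kkt_point_def feasible_def by auto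
    then show ?thesis by blast
  qed
qed

section \<open>Multipliers with linearly independent support\<close>

definition lin_indep_on :: "nat \<Rightarrow> (nat \<Rightarrow> real vec) \<Rightarrow> nat set \<Rightarrow> bool" where
  "lin_indep_on n a S \<longleftrightarrow> (\<forall>e. lin_comb n a e S = 0\<^sub>v n \<longrightarrow> (\<forall>i\<in>S. e i = 0))"

lemma not_lin_indep_on_positive:
  assumes dep: "\<not> lin_indep_on n a (T \<union> Eq)" and indE: "lin_indep_on n a Eq"
    and fin: "finite T" "finite Eq"
  obtains e i where "lin_comb n a e (T \<union> Eq) = 0\<^sub>v n" "i \<in> T" "e i > 0"
proof -
  obtain e0 where e0: "lin_comb n a e0 (T \<union> Eq) = 0\<^sub>v n" and nz: "\<exists>i\<in>T \<union> Eq. e0 i \<noteq> 0"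
    using dep unfolding lin_indep_on_def by blast
  have "\<exists>i\<in>T. e0 i \<noteq> 0"
  proof (rule ccontr)
    assume none: "\<not> (\<exists>i\<in>T. e0 i \<noteq> 0)"
    then have "lin_comb n a e0 (T \<union> Eq) = lin_comb n a e0 Eq"
      by (intro lin_comb_mono_neutral) (use fin in auto)
    then show False using indE e0 nz none unfolding lin_indep_on_def by auto
  qed
  then obtain i where i: "i \<in> T" "e0 i \<noteq> 0" by blast
  show ?thesis
  proof (cases "e0 i > 0")
    case True then show ?thesis using that e0 i by blast
  next
    case False
    have "lin_comb n a (\<lambda>i. - e0 i) (T \<union> Eq) = - 1 \<cdot>\<^sub>v lin_comb n a e0 (T \<union> Eq)"
      by (simp add: lin_comb_smult)
    then have "lin_comb n a (\<lambda>i. - e0 i) (T \<union> Eq) = 0\<^sub>v n" using e0 by auto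
    then show ?thesis using that[of "\<lambda>i. - e0 i" i] i False by auto
  qed
qed

lemma ratio_test:
  fixes c e :: "nat \<Rightarrow> real"
  assumes fin: "finite P" and ne: "P \<noteq> {}" and sign: "\<forall>i\<in>P. c i < 0 \<and> e i > 0"
  obtains t i0 where "t > 0" "i0 \<in> P" "c i0 + t * e i0 = 0" "\<forall>i\<in>P. c i + t * e i \<le> 0"
proof -
  define t where "t = Min ((\<lambda>i. - c i / e i) ` P)"
  have "t \<in> (\<lambda>i. - c i / e i) ` P" unfolding t_def using fin ne by (intro Min_in) auto
  then obtain i0 where i0: "i0 \<in> P" "t = - c i0 / e i0" by auto
  have "t > 0" using i0 sign by (auto intro: divide_neg_pos)
  moreover have "c i0 + t * e i0 = 0" using i0 sign by auto
  moreover have "c i + t * e i \<le> 0" if i: "i \<in> P" for i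
  proof -
    have "t \<le> - c i / e i" unfolding t_def using fin i by auto
    moreover have "e i > 0" using sign i by auto
    ultimately have "t * e i \<le> (- c i / e i) * e i" by (intro mult_right_mono) auto
    then show ?thesis using \<open>e i > 0\<close> by simp
  qed
  ultimately show ?thesis using that i0(1) by blast
qed

text \<open>Move \<open>c\<close> along the null combination \<open>e\<close> until the first multiplier with \<open>e i > 0\<close> hits
  zero; the multipliers \<open>c i < 0\<close> of the support stay nonpositive on the way.\<close>

lemma kkt_point_support_shrink:
  assumes fin: "finite Ineq" "finite Eq" and disj: "Ineq \<inter> Eq = {}"
    and k: "kkt_point n a \<beta> Ineq Eq x y c"
    and e: "lin_comb n a e ({i\<in>Ineq. c i \<noteq> 0} \<union> Eq) = 0\<^sub>v n"
    and i1: "i1 \<in> {i\<in>Ineq. c i \<noteq> 0}" "e i1 > 0"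
  obtains c' where "kkt_point n a \<beta> Ineq Eq x y c'" "{i\<in>Ineq. c' i \<noteq> 0} \<subset> {i\<in>Ineq. c i \<noteq> 0}"
proof -
  define T where "T = {i\<in>Ineq. c i \<noteq> 0}"
  have cT: "c i < 0" if "i \<in> T" for i
    using k disj that unfolding kkt_point_def T_def by force
  have P: "finite {i\<in>T. e i > 0}" "{i\<in>T. e i > 0} \<noteq> {}" "\<forall>i\<in>{i\<in>T. e i > 0}. c i < 0 \<and> e i > 0"
    using fin i1 cT unfolding T_def by auto
  obtain t i0 where t: "t > 0" and i0: "i0 \<in> {i\<in>T. e i > 0}" "c i0 + t * e i0 = 0"
    and le: "\<forall>i\<in>{i\<in>T. e i > 0}. c i + t * e i \<le> 0"
    by (rule ratio_test[OF P])
  define c' where "c' = (\<lambda>i. if i \<in> T \<union> Eq then c i + t * e i else c i)"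
  have "lin_comb n a c' (Ineq \<union> Eq) = lin_comb n a c' (T \<union> Eq)"
    by (rule lin_comb_mono_neutral) (use fin in \<open>auto simp: c'_def T_def\<close>)
  also have "\<dots> = lin_comb n a (\<lambda>i. c i + t * e i) (T \<union> Eq)"
    by (rule lin_comb_cong) (simp add: c'_def)
  also have "\<dots> = lin_comb n a c (T \<union> Eq)"
    using lin_comb_add_null e unfolding T_def by blast
  also have "\<dots> = lin_comb n a c (Ineq \<union> Eq)"
    by (rule lin_comb_mono_neutral[symmetric]) (use fin in \<open>auto simp: T_def\<close>)
  finally have lc: "lin_comb n a c' (Ineq \<union> Eq) = lin_comb n a c (Ineq \<union> Eq)" .
  have sign: "c' i \<le> 0" if i: "i \<in> Ineq - Eq" for i
  proof (cases "i \<in> T \<and> e i > 0")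
    case False
    then have "i \<in> T \<Longrightarrow> t * e i \<le> 0" using t by (simp add: mult_nonneg_nonpos)
    then show ?thesis using i cT[of i] unfolding c'_def T_def by auto
  qed (use le i in \<open>auto simp: c'_def\<close>)
  have "kkt_point n a \<beta> Ineq Eq x y c'"
    using k lc sign unfolding kkt_point_def c'_def T_def by (auto split: if_splits)
  moreover have "{i\<in>Ineq. c' i \<noteq> 0} \<subseteq> T - {i0}"
    using i0 disj unfolding c'_def T_def by (auto split: if_splits)
  then have "{i\<in>Ineq. c' i \<noteq> 0} \<subset> T" using i0(1) by blast
  ultimately show ?thesis using that unfolding T_def by blast
qed

lemma exists_kkt_point_lin_indep_support:
  assumes fin: "finite Ineq" "finite Eq" and disj: "Ineq \<inter> Eq = {}" and indE: "lin_indep_on n a Eq"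
    and k: "kkt_point n a \<beta> Ineq Eq x y c"
  obtains c' where "kkt_point n a \<beta> Ineq Eq x y c'" "lin_indep_on n a ({i\<in>Ineq. c' i \<noteq> 0} \<union> Eq)"
  using k
proof (induct "card {i\<in>Ineq. c i \<noteq> 0}" arbitrary: c rule: less_induct)
  case (less c)
  show ?case
  proof (cases "lin_indep_on n a ({i\<in>Ineq. c i \<noteq> 0} \<union> Eq)")
    case True then show ?thesis using less(2,3) by blast
  next
    case False
    obtain e i where "lin_comb n a e ({i\<in>Ineq. c i \<noteq> 0} \<union> Eq) = 0\<^sub>v n"
      "i \<in> {i\<in>Ineq. c i \<noteq> 0}" "e i > 0"
      using not_lin_indep_on_positive[OF False indE] fin by auto
    then obtain c' where "kkt_point n a \<beta> Ineq Eq x y c'" "{i\<in>Ineq. c' i \<noteq> 0} \<subset> {i\<in>Ineq. c i \<noteq> 0}"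
      using kkt_point_support_shrink[OF fin disj less(3)] by blast
    moreover from this(2) have "card {i\<in>Ineq. c' i \<noteq> 0} < card {i\<in>Ineq. c i \<noteq> 0}"
      using fin by (intro psubset_card_mono) auto
    ultimately show ?thesis using less(1,2) by blast
  qed
qed

lemma lin_indep_on_insert_span:
  assumes fin: "finite S" and i: "i \<notin> S" and ac: "a i \<in> carrier_vec n"
    and indS: "lin_indep_on n a S" and dep: "\<not> lin_indep_on n a (insert i S)"
  shows "\<exists>w. a i = lin_comb n a w S"
proof -
  obtain e where e: "lin_comb n a e (insert i S) = 0\<^sub>v n" and nz: "\<exists>j\<in>insert i S. e j \<noteq> 0"
    using dep unfolding lin_indep_on_def by auto
  have lci: "lin_comb n a e (insert i S) = e i \<cdot>\<^sub>v a i + lin_comb n a e S"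
    by (rule lin_comb_insert) (use fin i ac in auto)
  have ei: "e i \<noteq> 0"
  proof
    assume "e i = 0"
    moreover have "0 \<cdot>\<^sub>v a i + lin_comb n a e S = lin_comb n a e S" using ac by (intro eq_vecI) auto
    ultimately have "lin_comb n a e S = 0\<^sub>v n" using e lci by simp
    then show False using indS nz \<open>e i = 0\<close> unfolding lin_indep_on_def by auto
  qed
  have "a i = lin_comb n a (\<lambda>j. - e j / e i) S"
  proof (rule carrier_vec_eqI[of _ n])
    fix l assume l: "l < n"
    have "(e i \<cdot>\<^sub>v a i + lin_comb n a e S) $ l = 0" using e lci l by simp
    then have "e i * a i $ l + (\<Sum>j\<in>S. e j * a j $ l) = 0" using l ac by (simp add: lin_comb_index)
    then have "a i $ l = - (\<Sum>j\<in>S. e j * a j $ l) / e i" using ei by (simp add: field_simps)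
    also have "\<dots> = (\<Sum>j\<in>S. - e j / e i * a j $ l)"
      by (simp add: sum_divide_distrib sum_negf)
    finally show "a i $ l = lin_comb n a (\<lambda>j. - e j / e i) S $ l" using l by (simp add: lin_comb_index)
  qed (use ac in auto)
  then show ?thesis by blast
qed

lemma lin_indep_on_extend_spanning:
  assumes finI: "finite I" and finE: "finite Eq" and ac: "\<forall>i. a i \<in> carrier_vec n"
    and T: "T \<subseteq> I" and indT: "lin_indep_on n a (T \<union> Eq)" and disj: "I \<inter> Eq = {}"
  obtains K where "T \<subseteq> K" "K \<subseteq> I" "lin_indep_on n a (K \<union> Eq)"
    "\<forall>i\<in>I. \<exists>w. a i = lin_comb n a w (K \<union> Eq)"
proof -
  obtain K where K: "finite K" "maximal K (\<lambda>K. K \<subseteq> I \<and> lin_indep_on n a (K \<union> Eq))" "T \<subseteq> K"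
    using maximal_exists_superset[of I "\<lambda>K. K \<subseteq> I \<and> lin_indep_on n a (K \<union> Eq)" T] finI T indT
    by blast
  have KI: "K \<subseteq> I" and indK: "lin_indep_on n a (K \<union> Eq)" using K(2) unfolding maximal_def by auto
  have finKE: "finite (K \<union> Eq)" using K(1) finE by auto
  have "\<exists>w. a i = lin_comb n a w (K \<union> Eq)" if i: "i \<in> I" for i
  proof (cases "i \<in> K")
    case True
    then show ?thesis using lin_comb_delta[OF finKE, of i a n] ac by (metis UnI1)
  next
    case False
    have "\<not> lin_indep_on n a (insert i K \<union> Eq)"
      using K(2) KI i False unfolding maximal_def by blast
    then show ?thesis
      using lin_indep_on_insert_span[OF finKE _ _ indK] False disj i ac by auto
  qed
  then show ?thesis using that K(3) KI indK by blast
qed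

section \<open>The constraints of \<open>D\<close> as one indexed family\<close>

text \<open>Index \<open>i < m\<close> stands for row \<open>i\<close> of \<open>A\<close> and index \<open>m + k\<close> for row \<open>k\<close> of \<open>B\<close>. Row \<open>j\<close> of
  \<open>rowsub A K @\<^sub>r B\<close> is constraint \<open>stack_idx m K j\<close>, and \<open>stack_pos m K\<close> inverts \<open>stack_idx m K\<close>
  on \<open>K \<union> {m..<m+p}\<close>.\<close>

definition stack_row :: "real mat \<Rightarrow> real mat \<Rightarrow> nat \<Rightarrow> nat \<Rightarrow> real vec" where
  "stack_row A B m i = (if i < m then row A i else row B (i - m))"

definition stack_rhs :: "real vec \<Rightarrow> real vec \<Rightarrow> nat \<Rightarrow> nat \<Rightarrow> real" where
  "stack_rhs b d m i = (if i < m then b $ i else d $ (i - m))"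

definition stack_idx :: "nat \<Rightarrow> nat set \<Rightarrow> nat \<Rightarrow> nat" where
  "stack_idx m K j = (if j < card K then pick K j else m + (j - card K))"

definition stack_pos :: "nat \<Rightarrow> nat set \<Rightarrow> nat \<Rightarrow> nat" where
  "stack_pos m K i = (if i < m then card {a\<in>K. a < i} else card K + (i - m))"

lemma stack_row_carrier:
  "A \<in> carrier_mat m n \<Longrightarrow> B \<in> carrier_mat p n \<Longrightarrow> \<forall>i. stack_row A B m i \<in> carrier_vec n"
  by (auto simp: stack_row_def)

lemma stack_idx_in:
  "j < card K + p \<Longrightarrow> stack_idx m K j \<in> K \<union> {m..<m+p}"
  using pick_in_set[of j K] by (auto simp: stack_idx_def)

lemma stack_pos_idx:
  assumes "K \<subseteq> {..<m}" "j < card K + p"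
  shows "stack_pos m K (stack_idx m K j) = j"
  using assms pick_in_set[of j K] card_pick[of j K] by (auto simp: stack_idx_def stack_pos_def)

lemma card_less_than_in:
  fixes K :: "nat set"
  assumes "finite K" "i \<in> K"
  shows "card {a\<in>K. a < i} < card K"
proof (rule psubset_card_mono[OF assms(1)])
  have "i \<notin> {a\<in>K. a < i}" by simp
  then show "{a\<in>K. a < i} \<subset> K" using assms(2) by blast
qed

lemma stack_pos_less:
  assumes "K \<subseteq> {..<m}" "i \<in> K \<union> {m..<m+p}"
  shows "stack_pos m K i < card K + p"
  using assms card_less_than_in[of K i] finite_subset[of K "{..<m}"]
  by (auto simp: stack_pos_def)

lemma stack_idx_pos:
  assumes "K \<subseteq> {..<m}" "i \<in> K \<union> {m..<m+p}"
  shows "stack_idx m K (stack_pos m K i) = i"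
  using assms card_less_than_in[of K i] finite_subset[of K "{..<m}"] pick_card_in_set[of i K]
  by (auto simp: stack_pos_def stack_idx_def)

lemma sum_stack_idx:
  assumes K: "K \<subseteq> {..<m}"
  shows "(\<Sum>j\<in>{0..<card K + p}. f (stack_idx m K j)) = (\<Sum>i\<in>K \<union> {m..<m+p}. f i)"
  by (rule sum.reindex_bij_witness[where i = "stack_pos m K" and j = "stack_idx m K"])
    (use stack_idx_in stack_pos_idx[OF K] stack_pos_less[OF K] stack_idx_pos[OF K] in auto)

lemma rowsub_carrier:
  assumes A: "A \<in> carrier_mat m n" and K: "K \<subseteq> {..<m}"
  shows "rowsub A K \<in> carrier_mat (card K) n"
proof -
  have "{i. i < dim_row A \<and> i \<in> K} = K" "{j. j < dim_col A \<and> j \<in> UNIV} = {..<n}" using A K by auto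
  then have "dim_row (rowsub A K) = card K" "dim_col (rowsub A K) = n"
    unfolding rowsub_def dim_submatrix by simp_all
  then show ?thesis by (rule carrier_matI)
qed

lemma stacked_carrier:
  "A \<in> carrier_mat m n \<Longrightarrow> B \<in> carrier_mat p n \<Longrightarrow> K \<subseteq> {..<m} \<Longrightarrow>
    rowsub A K @\<^sub>r B \<in> carrier_mat (card K + p) n"
  using rowsub_carrier by blast

lemma append_rows_index:
  assumes A: "A \<in> carrier_mat n1 nc" and B: "B \<in> carrier_mat n2 nc" and i: "i < n1 + n2" and j: "j < nc"
  shows "(A @\<^sub>r B) $$ (i, j) = (if i < n1 then A $$ (i, j) else B $$ (i - n1, j))"
  using A B i j unfolding append_rows_def by (subst index_mat_four_block(1)) auto

lemma row_stacked:
  assumes A: "A \<in> carrier_mat m n" and B: "B \<in> carrier_mat p n" and K: "K \<subseteq> {..<m}"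
    and j: "j < card K + p"
  shows "row (rowsub A K @\<^sub>r B) j = stack_row A B m (stack_idx m K j)"
proof (rule carrier_vec_eqI[of _ n])
  have RK: "rowsub A K \<in> carrier_mat (card K) n" by (rule rowsub_carrier[OF A K])
  have dimK: "{i. i < dim_row A \<and> i \<in> K} = K" using A K by auto
  show "row (rowsub A K @\<^sub>r B) j \<in> carrier_vec n" using stacked_carrier[OF A B K] by (simp add: row_def)
  show "stack_row A B m (stack_idx m K j) \<in> carrier_vec n" using stack_row_carrier[OF A B] by blast
  fix l assume l: "l < n"
  have "(rowsub A K @\<^sub>r B) $$ (j, l) = stack_row A B m (stack_idx m K j) $ l"
  proof (cases "j < card K")
    case True
    then have "pick K j \<in> K" using pick_in_set by blast
    moreover have "rowsub A K $$ (j, l) = A $$ (pick K j, l)"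
      unfolding rowsub_def using submatrix_index[of j A K l UNIV] True l A dimK by (simp add: pick_UNIV)
    ultimately show ?thesis
      using append_rows_index[OF RK B j l] True K A l by (auto simp: stack_row_def stack_idx_def)
  next
    case False
    then have "stack_row A B m (stack_idx m K j) = row B (j - card K)"
      unfolding stack_idx_def stack_row_def by (subst if_not_P) auto
    then show ?thesis using append_rows_index[OF RK B j l] False B j l by simp
  qed
  then show "row (rowsub A K @\<^sub>r B) j $ l = stack_row A B m (stack_idx m K j) $ l"
    using stacked_carrier[OF A B K] j l by simp
qed

lemma stacked_mult_vec_index:
  assumes A: "A \<in> carrier_mat m n" and B: "B \<in> carrier_mat p n" and K: "K \<subseteq> {..<m}"
    and j: "j < card K + p"
  shows "((rowsub A K @\<^sub>r B) *\<^sub>v u) $ j = stack_row A B m (stack_idx m K j) \<bullet> u"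
  using stacked_carrier[OF A B K] row_stacked[OF A B K j] j by simp

lemma transpose_stacked_mult_vec:
  assumes A: "A \<in> carrier_mat m n" and B: "B \<in> carrier_mat p n" and K: "K \<subseteq> {..<m}"
  shows "transpose_mat (rowsub A K @\<^sub>r B) *\<^sub>v vec (card K + p) (\<lambda>j. e (stack_idx m K j))
        = lin_comb n (stack_row A B m) e (K \<union> {m..<m+p})"
proof (rule carrier_vec_eqI[of _ n])
  have R: "rowsub A K @\<^sub>r B \<in> carrier_mat (card K + p) n" by (rule stacked_carrier[OF A B K])
  then show "transpose_mat (rowsub A K @\<^sub>r B) *\<^sub>v vec (card K + p) (\<lambda>j. e (stack_idx m K j))
    \<in> carrier_vec n" by simp
  fix l assume l: "l < n"
  have "(transpose_mat (rowsub A K @\<^sub>r B) *\<^sub>v vec (card K + p) (\<lambda>j. e (stack_idx m K j))) $ l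
     = (\<Sum>j\<in>{0..<card K + p}. row (rowsub A K @\<^sub>r B) j $ l * e (stack_idx m K j))"
    using R l by (simp add: mult_mat_vec_def scalar_prod_def)
  also have "\<dots> = (\<Sum>j\<in>{0..<card K + p}. e (stack_idx m K j) * stack_row A B m (stack_idx m K j) $ l)"
    by (rule sum.cong) (simp_all add: row_stacked[OF A B K])
  also have "\<dots> = (\<Sum>i\<in>K \<union> {m..<m+p}. e i * stack_row A B m i $ l)"
    by (rule sum_stack_idx[OF K])
  also have "\<dots> = lin_comb n (stack_row A B m) e (K \<union> {m..<m+p}) $ l"
    using l by (simp add: lin_comb_index)
  finally show "(transpose_mat (rowsub A K @\<^sub>r B) *\<^sub>v vec (card K + p) (\<lambda>j. e (stack_idx m K j))) $ l
     = lin_comb n (stack_row A B m) e (K \<union> {m..<m+p}) $ l" .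
qed simp

text \<open>\<open>vec_space.rank\<close> is defined through the set of columns, so a repeated column has to be
  excluded separately before linear independence of that set gives full rank.\<close>

lemma full_col_rankI:
  fixes M :: "real mat"
  assumes M: "M \<in> carrier_mat n r"
    and inj: "\<And>w. w \<in> carrier_vec r \<Longrightarrow> M *\<^sub>v w = 0\<^sub>v n \<Longrightarrow> w = 0\<^sub>v r"
  shows "full_col_rank M"
proof -
  interpret vs: vec_space "TYPE(real)" n .
  have dist: "distinct (cols M)"
  proof (rule ccontr)
    assume "\<not> distinct (cols M)"
    then obtain j1 j2 where j: "j1 < r" "j2 < r" "j1 \<noteq> j2" "col M j1 = col M j2"
      using M by (auto simp: distinct_conv_nth)
    define w where "w = vec r (\<lambda>j. (if j = j1 then 1 else 0) - (if j = j2 then 1 else (0::real)))"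
    have "M *\<^sub>v w = 0\<^sub>v n"
    proof (rule carrier_vec_eqI[of _ n])
      fix l assume l: "l < n"
      have "(M *\<^sub>v w) $ l = (\<Sum>j\<in>{0..<r}. (if j = j1 then M $$ (l, j) else 0))
                         - (\<Sum>j\<in>{0..<r}. (if j = j2 then M $$ (l, j) else 0))"
        using M l unfolding w_def sum_subtractf[symmetric]
        by (auto simp: mult_mat_vec_def scalar_prod_def intro: sum.cong)
      also have "\<dots> = col M j1 $ l - col M j2 $ l" using j(1,2) M l by simp
      also have "\<dots> = 0" by (simp only: j(4) diff_self)
      finally show "(M *\<^sub>v w) $ l = 0\<^sub>v n $ l" using l by simp
    qed (use M w_def in auto)
    then have "w $ j1 = 0" using inj[of w] j unfolding w_def by auto
    then show False using j unfolding w_def by simp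
  qed
  have "vs.lin_indpt (set (cols M))"
  proof
    assume "vs.lin_dep (set (cols M))"
    then obtain v where "v \<in> carrier_vec r" "v \<noteq> 0\<^sub>v r" "M *\<^sub>v v = 0\<^sub>v n"
      using vs.lin_depE[OF M _ dist] by blast
    then show False using inj by blast
  qed
  then have "vs.rank M = r" by (rule vs.lin_indpt_full_rank[OF M dist])
  then show ?thesis unfolding full_col_rank_def using M by simp
qed

lemma transpose_stacked_mult_vec_inj:
  assumes A: "A \<in> carrier_mat m n" and B: "B \<in> carrier_mat p n" and K: "K \<subseteq> {..<m}"
    and ind: "lin_indep_on n (stack_row A B m) (K \<union> {m..<m+p})"
    and w: "w \<in> carrier_vec (card K + p)" and z: "transpose_mat (rowsub A K @\<^sub>r B) *\<^sub>v w = 0\<^sub>v n"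
  shows "w = 0\<^sub>v (card K + p)"
proof -
  define e where "e = (\<lambda>i. w $ stack_pos m K i)"
  have "vec (card K + p) (\<lambda>j. e (stack_idx m K j)) = w"
    unfolding e_def by (rule eq_vecI) (use w stack_pos_idx[OF K] in auto)
  then have "lin_comb n (stack_row A B m) e (K \<union> {m..<m+p}) = 0\<^sub>v n"
    using transpose_stacked_mult_vec[OF A B K, of e] z by simp
  then have "\<forall>i\<in>K \<union> {m..<m+p}. e i = 0" using ind unfolding lin_indep_on_def by blast
  show ?thesis
  proof (rule eq_vecI)
    fix j assume "j < dim_vec (0\<^sub>v (card K + p))"
    then have j: "j < card K + p" by simp
    have "e (stack_idx m K j) = 0" using stack_idx_in[OF j] \<open>\<forall>i\<in>_. e i = 0\<close> by blast
    then show "w $ j = 0\<^sub>v (card K + p) $ j" using stack_pos_idx[OF K j] j unfolding e_def by simp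
  qed (use w in simp)
qed

lemma full_col_rank_stacked:
  assumes A: "A \<in> carrier_mat m n" and B: "B \<in> carrier_mat p n" and K: "K \<subseteq> {..<m}"
    and ind: "lin_indep_on n (stack_row A B m) (K \<union> {m..<m+p})"
  shows "full_col_rank (transpose_mat (rowsub A K @\<^sub>r B))"
  by (rule full_col_rankI[of _ n "card K + p"])
    (use stacked_carrier[OF A B K] transpose_stacked_mult_vec_inj[OF A B K ind] in auto)

text \<open>Here \<open>vec_space.rank\<close> is the column rank, so \<open>rank B = p\<close> says that the columns of \<open>B\<close> span
  the whole of \<open>\<real>\<^sup>p\<close>; a vector orthogonal to all of them is then zero.\<close>

lemma transpose_mult_vec_inj_of_rank:
  fixes B :: "real mat"
  assumes B: "B \<in> carrier_mat p n" and r: "vec_space.rank p B = p" and w: "w \<in> carrier_vec p"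
    and z: "transpose_mat B *\<^sub>v w = 0\<^sub>v n"
  shows "w = 0\<^sub>v p"
proof -
  interpret vs: vec_space "TYPE(real)" p .
  obtain S where S: "finite S" "maximal S (\<lambda>T. T \<subseteq> set (cols B) \<and> vs.lin_indpt T)"
  proof -
    have "{} \<subseteq> carrier_vec p \<and> vs.lin_indpt {}"
      by (metis (no_types) empty_subsetI vs.fin_dim vs.finite_basis_exists vs.subset_li_is_li
          vec_vs vectorspace.basis_def)
    then show ?thesis
      using that maximal_exists_superset[of "set (cols B)" "\<lambda>T. T \<subseteq> set (cols B) \<and> vs.lin_indpt T" "{}"]
      by auto
  qed
  have cardS: "card S = p" using vs.rank_card_indpt[OF B S(2)] r by simp
  have Ssub: "S \<subseteq> set (cols B)" and li: "vs.lin_indpt S" using S(2) unfolding maximal_def by auto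
  have Sc: "S \<subseteq> carrier_vec p" using Ssub B cols_dim by blast
  have "vs.basis S"
    by (rule vs.dim_li_is_basis) (use S(1) Sc li cardS vs.dim_is_n in auto)
  then have spanS: "vs.span S = carrier_vec p" unfolding vs.basis_def by auto
  have "w \<in> vs.orthogonal_complement S"
    unfolding vs.orthogonal_complement_def
  proof (intro CollectI conjI ballI)
    fix y assume "y \<in> S"
    then obtain j where j: "j < n" "y = col B j" using Ssub B by (auto simp: cols_def)
    have "(transpose_mat B *\<^sub>v w) $ j = 0" using z j by simp
    then show "w \<bullet> y = 0" using j w B comm_scalar_prod[of w p "col B j"] by auto
  qed (rule w)
  then have "w \<in> vs.orthogonal_complement (vs.span S)" using Sc by simp
  then have "w \<bullet> w = 0" using w spanS unfolding vs.orthogonal_complement_def by auto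
  then show ?thesis using scalar_prod_self_eq_0[OF w] by simp
qed

lemma lin_comb_stack_row_A:
  assumes "A \<in> carrier_mat m n"
  shows "lin_comb n (stack_row A B m) c {0..<m} = transpose_mat A *\<^sub>v vec m c"
  by (rule eq_vecI) (use assms in \<open>auto simp: lin_comb_index stack_row_def mult_mat_vec_def
      scalar_prod_def mult.commute intro: sum.cong\<close>)

lemma lin_comb_stack_row_B:
  assumes "B \<in> carrier_mat p n"
  shows "lin_comb n (stack_row A B m) c {m..<m+p} = transpose_mat B *\<^sub>v vec p (\<lambda>k. c (m + k))"
proof (rule eq_vecI)
  fix l assume "l < dim_vec (transpose_mat B *\<^sub>v vec p (\<lambda>k. c (m + k)))"
  then have l: "l < n" using assms by simp
  have "(\<Sum>i\<in>{m..<m+p}. c i * stack_row A B m i $ l) = (\<Sum>k\<in>{0..<p}. c (m + k) * stack_row A B m (m + k) $ l)"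
    by (rule sum.reindex_bij_witness[where i = "\<lambda>k. m + k" and j = "\<lambda>i. i - m"]) auto
  then show "lin_comb n (stack_row A B m) c {m..<m+p} $ l = (transpose_mat B *\<^sub>v vec p (\<lambda>k. c (m + k))) $ l"
    using assms l by (simp add: lin_comb_index stack_row_def mult_mat_vec_def scalar_prod_def mult.commute)
qed (use assms in simp)

lemma lin_comb_stack_row:
  assumes "A \<in> carrier_mat m n" "B \<in> carrier_mat p n"
  shows "lin_comb n (stack_row A B m) c ({0..<m} \<union> {m..<m+p})
    = transpose_mat A *\<^sub>v vec m c + transpose_mat B *\<^sub>v vec p (\<lambda>k. c (m + k))"
proof -
  have "lin_comb n (stack_row A B m) c ({0..<m} \<union> {m..<m+p})
      = lin_comb n (stack_row A B m) c {0..<m} + lin_comb n (stack_row A B m) c {m..<m+p}"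
    by (rule lin_comb_union) auto
  then show ?thesis unfolding lin_comb_stack_row_A[OF assms(1)] lin_comb_stack_row_B[OF assms(2)] .
qed

lemma lin_indep_on_stack_row_B:
  assumes B: "B \<in> carrier_mat p n" and r: "vec_space.rank p B = p"
  shows "lin_indep_on n (stack_row A B m) {m..<m+p}"
  unfolding lin_indep_on_def
proof (intro allI impI ballI)
  fix e i assume z: "lin_comb n (stack_row A B m) e {m..<m+p} = 0\<^sub>v n" and i: "i \<in> {m..<m+p}"
  have "vec p (\<lambda>k. e (m + k)) = 0\<^sub>v p"
    using transpose_mult_vec_inj_of_rank[OF B r] z lin_comb_stack_row_B[OF B] by simp
  moreover have "i - m < p" using i by auto
  ultimately show "e i = 0" using i by (metis index_vec index_zero_vec(1) le_add_diff_inverse atLeastLessThan_iff)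
qed

lemma polyD_eq_feasible:
  assumes A: "A \<in> carrier_mat m n" and B: "B \<in> carrier_mat p n" and d: "d \<in> carrier_vec p"
  shows "polyD n A b B d = {z. feasible n (stack_row A B m) (stack_rhs b d m) {0..<m} {m..<m+p} z}"
proof (rule Set.set_eqI, rule iffI)
  fix z assume "z \<in> polyD n A b B d"
  then have z: "z \<in> carrier_vec n" and ge: "\<forall>i<m. b $ i \<le> (A *\<^sub>v z) $ i" and eq: "B *\<^sub>v z = d"
    using A unfolding polyD_def by auto
  have "stack_row A B m i \<bullet> z = stack_rhs b d m i" if "i \<in> {m..<m+p}" for i
    using arg_cong[OF eq, of "\<lambda>v. v $ (i - m)"] that B by (auto simp: stack_row_def stack_rhs_def)
  then show "z \<in> {z. feasible n (stack_row A B m) (stack_rhs b d m) {0..<m} {m..<m+p} z}"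
    unfolding feasible_def using z ge A by (auto simp: stack_row_def stack_rhs_def)
next
  fix z assume "z \<in> {z. feasible n (stack_row A B m) (stack_rhs b d m) {0..<m} {m..<m+p} z}"
  then have z: "z \<in> carrier_vec n" and ge: "\<forall>i\<in>{0..<m}. stack_rhs b d m i \<le> stack_row A B m i \<bullet> z"
    and eq: "\<forall>i\<in>{m..<m+p}. stack_row A B m i \<bullet> z = stack_rhs b d m i" unfolding feasible_def by auto
  have "B *\<^sub>v z = d"
  proof (rule carrier_vec_eqI[of _ p])
    fix k assume k: "k < p"
    then show "(B *\<^sub>v z) $ k = d $ k" using B eq[rule_format, of "m + k"] by (simp add: stack_row_def stack_rhs_def)
  qed (use B d z in auto)
  then show "z \<in> polyD n A b B d" using z ge A unfolding polyD_def by (auto simp: stack_row_def stack_rhs_def)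
qed

section \<open>Pseudo-inverses and orthogonal projectors\<close>

lemma penrose_unique:
  fixes S X Y :: "real mat"
  assumes S: "S \<in> carrier_mat k k" and X: "X \<in> carrier_mat k k" and Y: "Y \<in> carrier_mat k k"
    and x1: "S * X * S = S" and x2: "X * S * X = X"
    and x3: "transpose_mat (S * X) = S * X" and x4: "transpose_mat (X * S) = X * S"
    and y1: "S * Y * S = S" and y2: "Y * S * Y = Y"
    and y3: "transpose_mat (S * Y) = S * Y" and y4: "transpose_mat (Y * S) = Y * S"
  shows "X = Y"
proof -
  have c[simp]: "P * Q \<in> carrier_mat k k"
    if "P \<in> carrier_mat k k" "Q \<in> carrier_mat k k" for P Q :: "real mat" using that by auto
  note as = assoc_mult_mat[of _ k k _ k _ k]
  note tm = transpose_mult[of _ k k _ k]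
  have tS: "transpose_mat S = transpose_mat S * transpose_mat Z * transpose_mat S"
    if "Z \<in> carrier_mat k k" "S * Z * S = S" "transpose_mat (S * Z) = S * Z" for Z
  proof -
    have "transpose_mat S = transpose_mat (S * Z * S)" using that by simp
    also have "\<dots> = transpose_mat S * transpose_mat (S * Z)" using tm[OF c[OF S that(1)] S] by simp
    also have "\<dots> = transpose_mat S * (transpose_mat Z * transpose_mat S)" using tm[OF S that(1)] by simp
    finally show ?thesis using S that(1) by (simp add: as)
  qed
  have "X = X * (S * X)" using x2 X S by (simp add: as)
  also have "\<dots> = X * transpose_mat X * transpose_mat S" using x3 tm[OF S X] X S by (simp add: as)
  also have "\<dots> = X * transpose_mat X * (transpose_mat S * transpose_mat Y * transpose_mat S)"
    using tS[OF Y y1 y3] by simp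
  also have "\<dots> = X * (transpose_mat X * transpose_mat S) * (transpose_mat Y * transpose_mat S)"
    using X S Y by (simp add: as)
  also have "\<dots> = X * (S * X) * (S * Y)" using x3 y3 tm[OF S X] tm[OF S Y] by simp
  also have "\<dots> = (X * S * X) * S * Y" using X S Y by (simp add: as)
  finally have ex: "X = X * S * Y" using x2 by simp
  have "Y = (Y * S) * Y" using y2 by simp
  also have "\<dots> = transpose_mat S * transpose_mat Y * Y" using y4 tm[OF Y S] by simp
  also have "\<dots> = (transpose_mat S * transpose_mat X * transpose_mat S) * transpose_mat Y * Y"
    using tS[OF X x1 x3] by simp
  also have "\<dots> = (transpose_mat S * transpose_mat X) * (transpose_mat S * transpose_mat Y) * Y"
    using X S Y by (simp add: as)
  also have "\<dots> = (X * S) * (Y * S) * Y" using x4 y4 tm[OF X S] tm[OF Y S] by simp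
  also have "\<dots> = X * S * (Y * S * Y)" using X S Y by (simp add: as)
  finally have "Y = X * S * Y" using y2 by simp
  then show ?thesis using ex by simp
qed

lemma pinv_eqI:
  fixes S X :: "real mat"
  assumes S: "S \<in> carrier_mat k k" and X: "X \<in> carrier_mat k k"
    and "S * X * S = S" "X * S * X = X" "transpose_mat (S * X) = S * X" "transpose_mat (X * S) = X * S"
  shows "pinv S = X"
  unfolding pinv_def
proof (rule the_equality)
  show "X \<in> carrier_mat (dim_col S) (dim_row S) \<and> S * X * S = S \<and> X * S * X = X \<and>
    transpose_mat (S * X) = S * X \<and> transpose_mat (X * S) = X * S" using assms by auto
  fix Y assume "Y \<in> carrier_mat (dim_col S) (dim_row S) \<and> S * Y * S = S \<and> Y * S * Y = Y \<and>
    transpose_mat (S * Y) = S * Y \<and> transpose_mat (Y * S) = Y * S"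
  then show "Y = X" using penrose_unique[OF S X, of Y] assms by auto
qed

lemma gram_mult_vec_inj:
  fixes R :: "real mat"
  assumes R: "R \<in> carrier_mat r n"
    and inj: "\<And>w. w \<in> carrier_vec r \<Longrightarrow> transpose_mat R *\<^sub>v w = 0\<^sub>v n \<Longrightarrow> w = 0\<^sub>v r"
    and v: "v \<in> carrier_vec r" and z: "(R * transpose_mat R) *\<^sub>v v = 0\<^sub>v r"
  shows "v = 0\<^sub>v r"
proof -
  define u where "u = transpose_mat R *\<^sub>v v"
  have u: "u \<in> carrier_vec n" using R v u_def by auto
  have "R *\<^sub>v u = 0\<^sub>v r" using z R v u_def by (simp add: assoc_mult_mat_vec[of _ r n _ r])
  then have "u \<bullet> u = 0" using transpose_vec_mult_scalar[OF R u v] v u_def by simp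
  then show ?thesis using scalar_prod_self_eq_0[OF u] inj[OF v] u_def by simp
qed

lemma transpose_inverse_symmetric:
  fixes G Gi :: "real mat"
  assumes G: "G \<in> carrier_mat k k" and Gi: "Gi \<in> carrier_mat k k" and sym: "transpose_mat G = G"
    and i1: "G * Gi = 1\<^sub>m k" and i2: "Gi * G = 1\<^sub>m k"
  shows "transpose_mat Gi = Gi"
proof -
  have "transpose_mat Gi = transpose_mat Gi * (G * Gi)" using i1 Gi by simp
  also have "\<dots> = (transpose_mat Gi * transpose_mat G) * Gi"
    using G Gi sym by (simp add: assoc_mult_mat[of _ k k _ k _ k])
  also have "transpose_mat Gi * transpose_mat G = transpose_mat (G * Gi)" using transpose_mult[OF G Gi] by simp
  finally show ?thesis using i1 Gi by simp
qed

lemma gram_inverse: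
  fixes R :: "real mat"
  assumes R: "R \<in> carrier_mat r n"
    and inj: "\<And>w. w \<in> carrier_vec r \<Longrightarrow> transpose_mat R *\<^sub>v w = 0\<^sub>v n \<Longrightarrow> w = 0\<^sub>v r"
  obtains Gi where "mat_inverse (R * transpose_mat R) = Some Gi" "Gi \<in> carrier_mat r r"
    "R * transpose_mat R * Gi = 1\<^sub>m r" "Gi * (R * transpose_mat R) = 1\<^sub>m r" "transpose_mat Gi = Gi"
proof -
  define G where "G = R * transpose_mat R"
  have G: "G \<in> carrier_mat r r" using R unfolding G_def by simp
  have "det G \<noteq> 0"
    using det_0_iff_vec_prod_zero[OF G] gram_mult_vec_inj[OF R inj] unfolding G_def by blast
  then have "G \<in> Units (ring_mat TYPE(real) r (undefined::nat))" by (rule det_non_zero_imp_unit[OF G])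
  then have "mat_inverse G \<noteq> None" using mat_inverse(1)[OF G, of "undefined::nat"] by blast
  then obtain Gi where Gi0: "mat_inverse G = Some Gi" by auto
  then have inv: "G * Gi = 1\<^sub>m r" "Gi * G = 1\<^sub>m r" "Gi \<in> carrier_mat r r"
    using mat_inverse(2)[OF G] by auto
  have "transpose_mat G = G" unfolding G_def using transpose_mult[OF R, of "transpose_mat R" r] R by simp
  then have "transpose_mat Gi = Gi" using transpose_inverse_symmetric[OF G inv(3)] inv(1,2) by blast
  then show ?thesis using that Gi0 inv unfolding G_def by blast
qed

text \<open>\<open>Q = R\<^sup>T Gi R\<close> is the orthogonal projector onto the row space of \<open>R\<close>, which contains the
  rows of \<open>N\<close>; hence \<open>N Q = N\<close>.\<close>

lemma rows_in_span_factor: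
  fixes R N Gi :: "real mat"
  assumes R: "R \<in> carrier_mat r n" and N: "N \<in> carrier_mat s n" and Gi: "Gi \<in> carrier_mat r r"
    and GiG: "Gi * (R * transpose_mat R) = 1\<^sub>m r" and symGi: "transpose_mat Gi = Gi"
    and rows: "\<And>j. j < s \<Longrightarrow> \<exists>w\<in>carrier_vec r. row N j = transpose_mat R *\<^sub>v w"
  shows "N * (transpose_mat R * Gi) * R = N"
proof -
  define RT where "RT = transpose_mat R"
  define Q where "Q = RT * (Gi * R)"
  have RT: "RT \<in> carrier_mat n r" using R RT_def by auto
  have GiR: "Gi * R \<in> carrier_mat r n" using Gi R by simp
  have Q: "Q \<in> carrier_mat n n" using RT GiR Q_def by simp
  have "Q * RT = RT * ((Gi * R) * RT)" unfolding Q_def by (rule assoc_mult_mat[OF RT GiR RT])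
  also have "(Gi * R) * RT = Gi * (R * RT)" by (rule assoc_mult_mat[OF Gi R RT])
  finally have QRT: "Q * RT = RT" using GiG right_mult_one_mat[OF RT] unfolding RT_def by simp
  have "transpose_mat Q = transpose_mat (Gi * R) * transpose_mat RT"
    unfolding Q_def by (rule transpose_mult[OF RT GiR])
  also have "transpose_mat (Gi * R) = RT * Gi" unfolding RT_def using transpose_mult[OF Gi R] symGi by simp
  also have "transpose_mat RT = R" unfolding RT_def by simp
  also have "RT * Gi * R = Q" unfolding Q_def by (rule assoc_mult_mat[OF RT Gi R])
  finally have symQ: "transpose_mat Q = Q" .
  have QNT: "Q * transpose_mat N = transpose_mat N"
  proof (rule mat_col_eqI)
    fix j assume "j < dim_col (transpose_mat N)"
    then have j: "j < s" using N by simp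
    obtain w where w: "w \<in> carrier_vec r" and rw: "row N j = RT *\<^sub>v w"
      using rows[OF j] unfolding RT_def by blast
    have "col (Q * transpose_mat N) j = Q *\<^sub>v col (transpose_mat N) j" using Q N j by (intro col_mult2) auto
    also have "\<dots> = Q *\<^sub>v (RT *\<^sub>v w)" using N j rw by simp
    also have "\<dots> = (Q * RT) *\<^sub>v w" using Q RT w by simp
    finally show "col (Q * transpose_mat N) j = col (transpose_mat N) j" using QRT rw N j by simp
  qed (use Q N in auto)
  have "transpose_mat (N * Q) = transpose_mat N" using transpose_mult[OF N Q] symQ QNT by simp
  then have NQ: "N * Q = N" by (metis transpose_transpose)
  have "N * (RT * Gi) * R = N * ((RT * Gi) * R)" using N RT Gi R by (simp add: assoc_mult_mat[of _ s n _ r _ n])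
  also have "(RT * Gi) * R = Q" unfolding Q_def by (rule assoc_mult_mat[OF RT Gi R])
  finally have "N * (RT * Gi) * R = N" using NQ by simp
  then show ?thesis unfolding RT_def .
qed

lemma factor_mult_vec_inj:
  fixes R C Gi :: "real mat"
  assumes R: "R \<in> carrier_mat r n" and C: "C \<in> carrier_mat s r" and Gi: "Gi \<in> carrier_mat r r"
    and GGi: "R * transpose_mat R * Gi = 1\<^sub>m r"
    and nul: "\<And>u. u \<in> carrier_vec n \<Longrightarrow> (C * R) *\<^sub>v u = 0\<^sub>v s \<Longrightarrow> R *\<^sub>v u = 0\<^sub>v r"
    and v: "v \<in> carrier_vec r" and Cv: "C *\<^sub>v v = 0\<^sub>v s"
  shows "v = 0\<^sub>v r"
proof -
  define u where "u = transpose_mat R *\<^sub>v (Gi *\<^sub>v v)"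
  have u: "u \<in> carrier_vec n" using R Gi v u_def by simp
  have RRT: "R * transpose_mat R \<in> carrier_mat r r" using R by simp
  have "v = (R * transpose_mat R * Gi) *\<^sub>v v" using GGi v by simp
  also have "\<dots> = (R * transpose_mat R) *\<^sub>v (Gi *\<^sub>v v)" by (rule assoc_mult_mat_vec[OF RRT Gi v])
  also have "\<dots> = R *\<^sub>v u" unfolding u_def using R Gi v by (intro assoc_mult_mat_vec) auto
  finally have Ru: "R *\<^sub>v u = v" by simp
  have "(C * R) *\<^sub>v u = 0\<^sub>v s" using C R u Ru Cv by (simp add: assoc_mult_mat_vec[of _ s r _ n])
  then show ?thesis using nul[OF u] Ru by simp
qed

lemma pinv_factored_gram:
  fixes C G Gi H :: "real mat"
  assumes C: "C \<in> carrier_mat s r" and G: "G \<in> carrier_mat r r" and Gi: "Gi \<in> carrier_mat r r"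
    and GGi: "G * Gi = 1\<^sub>m r" and GiG: "Gi * G = 1\<^sub>m r"
    and H: "H \<in> carrier_mat r r" and CH: "transpose_mat C * C * H = 1\<^sub>m r"
    and HC: "H * (transpose_mat C * C) = 1\<^sub>m r" and symH: "transpose_mat H = H"
  shows "pinv (C * (G * transpose_mat C)) = C * H * (Gi * (H * transpose_mat C))"
proof -
  define CT where "CT = transpose_mat C"
  define P where "P = C * H"
  define PT where "PT = H * CT"
  define S where "S = C * (G * CT)"
  define M where "M = C * PT"
  define X where "X = P * (Gi * PT)"
  have CT: "CT \<in> carrier_mat r s" using C CT_def by simp
  have P: "P \<in> carrier_mat s r" and PT: "PT \<in> carrier_mat r s" using C H CT P_def PT_def by auto
  have GCT: "G * CT \<in> carrier_mat r s" and GiPT: "Gi * PT \<in> carrier_mat r s" using G Gi CT PT by auto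
  have S: "S \<in> carrier_mat s s" and X: "X \<in> carrier_mat s s" using C GCT P GiPT S_def X_def by auto
  have CTP: "CT * P = 1\<^sub>m r" unfolding P_def CT_def using assoc_mult_mat[OF CT[unfolded CT_def] C H] CH by simp
  have PTC: "PT * C = 1\<^sub>m r" unfolding PT_def CT_def using assoc_mult_mat[OF H CT[unfolded CT_def] C] HC by simp
  have CTX: "CT * X = Gi * PT"
    unfolding X_def using assoc_mult_mat[OF CT P GiPT, symmetric] CTP left_mult_one_mat[OF GiPT] by simp
  have PTS: "PT * S = G * CT"
    unfolding S_def using assoc_mult_mat[OF PT C GCT, symmetric] PTC left_mult_one_mat[OF GCT] by simp
  have SX: "S * X = M"
  proof -
    have "S * X = C * (G * (CT * X))"
      unfolding S_def using assoc_mult_mat[OF C GCT X] assoc_mult_mat[OF G CT X] by simp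
    also have "G * (CT * X) = PT"
      unfolding CTX using assoc_mult_mat[OF G Gi PT, symmetric] GGi left_mult_one_mat[OF PT] by simp
    finally show ?thesis unfolding M_def .
  qed
  have XS: "X * S = M"
  proof -
    have "X * S = P * (Gi * (PT * S))"
      unfolding X_def using assoc_mult_mat[OF P GiPT S] assoc_mult_mat[OF Gi PT S] by simp
    also have "Gi * (PT * S) = CT"
      unfolding PTS using assoc_mult_mat[OF Gi G CT, symmetric] GiG left_mult_one_mat[OF CT] by simp
    also have "P * CT = M" unfolding M_def P_def PT_def by (rule assoc_mult_mat[OF C H CT])
    finally show ?thesis .
  qed
  have symM: "transpose_mat M = M"
  proof -
    have "transpose_mat M = transpose_mat PT * CT" unfolding M_def CT_def by (rule transpose_mult[OF C PT])
    also have "transpose_mat PT = P" unfolding PT_def P_def CT_def using transpose_mult[OF H CT[unfolded CT_def]] symH by simp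
    finally show ?thesis unfolding M_def P_def PT_def using assoc_mult_mat[OF C H CT] by simp
  qed
  have "S * X * S = S"
    unfolding SX M_def using assoc_mult_mat[OF C PT S] PTS unfolding S_def by simp
  moreover have "X * S * X = X"
    unfolding XS M_def PT_def using assoc_mult_mat[OF C H CT] assoc_mult_mat[OF P CT X] CTX
    unfolding P_def X_def by simp
  ultimately have "pinv S = X" using pinv_eqI[OF S X] SX XS symM by simp
  then show ?thesis unfolding S_def X_def P_def PT_def CT_def .
qed

lemma transpose_pinv_gram_factor:
  fixes C R Gi :: "real mat"
  assumes C: "C \<in> carrier_mat s r" and R: "R \<in> carrier_mat r n" and Gi: "Gi \<in> carrier_mat r r"
    and GGi: "R * transpose_mat R * Gi = 1\<^sub>m r" and GiG: "Gi * (R * transpose_mat R) = 1\<^sub>m r"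
    and Cinj: "\<And>v. v \<in> carrier_vec r \<Longrightarrow> C *\<^sub>v v = 0\<^sub>v s \<Longrightarrow> v = 0\<^sub>v r"
  shows "transpose_mat (C * R) * pinv (C * R * transpose_mat (C * R)) * (C * R) = transpose_mat R * Gi * R"
proof -
  define CT where "CT = transpose_mat C"
  define RT where "RT = transpose_mat R"
  define G where "G = R * RT"
  have CT: "CT \<in> carrier_mat r s" and RT: "RT \<in> carrier_mat n r" and G: "G \<in> carrier_mat r r"
    using C R unfolding CT_def RT_def G_def by auto
  obtain H where H: "H \<in> carrier_mat r r" "CT * C * H = 1\<^sub>m r" "H * (CT * C) = 1\<^sub>m r"
    "transpose_mat H = H"
    using gram_inverse[OF CT] Cinj unfolding CT_def by auto
  define Y where "Y = Gi * (H * CT)"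
  have HCT: "H * CT \<in> carrier_mat r s" and Y: "Y \<in> carrier_mat r s" using H CT Gi Y_def by auto
  have "C * R * transpose_mat (C * R) = C * (R * (RT * CT))"
    using transpose_mult[OF C R] assoc_mult_mat[OF C R, of "RT * CT" s] RT CT
    unfolding RT_def CT_def by simp
  also have "R * (RT * CT) = G * CT" unfolding G_def by (rule assoc_mult_mat[OF R RT CT, symmetric])
  finally have "pinv (C * R * transpose_mat (C * R)) = C * H * Y"
    using pinv_factored_gram[OF C G Gi _ _ H(1) H(2,3)[unfolded CT_def] H(4)] GGi GiG
    unfolding Y_def G_def RT_def CT_def by simp
  moreover have "CT * (C * H * Y) = Y"
  proof -
    have CH: "C * H \<in> carrier_mat s r" using C H(1) by simp
    have "CT * (C * H * Y) = CT * (C * H) * Y" by (rule assoc_mult_mat[OF CT CH Y, symmetric])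
    also have "CT * (C * H) = 1\<^sub>m r" using assoc_mult_mat[OF CT C H(1)] H(2) by simp
    finally show ?thesis using Y by simp
  qed
  moreover have "Y * (C * R) = Gi * R"
  proof -
    have "Y * (C * R) = Gi * (H * CT * C * R)"
      unfolding Y_def using Gi HCT C R
      by (simp add: assoc_mult_mat[of _ r r _ s _ n] assoc_mult_mat[of _ r s _ r _ n])
    also have "H * CT * C = 1\<^sub>m r" using assoc_mult_mat[OF H(1) CT C] H(3) by simp
    finally show ?thesis using R by simp
  qed
  ultimately have "transpose_mat (C * R) * pinv (C * R * transpose_mat (C * R)) * (C * R) = RT * (Gi * R)"
    using transpose_mult[OF C R] assoc_mult_mat[OF RT CT, of "C * H * Y" s]
      assoc_mult_mat[OF RT Y, of "C * R" n] C H Y R unfolding RT_def CT_def by simp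
  then show ?thesis using assoc_mult_mat[OF RT Gi R] unfolding RT_def by simp
qed

text \<open>Both sides are the orthogonal projector onto the common row space of \<open>N\<close> and \<open>R\<close>.\<close>

lemma projector_pinv_eq_inverse:
  fixes R N :: "real mat"
  assumes R: "R \<in> carrier_mat r n" and N: "N \<in> carrier_mat s n"
    and injR: "\<And>w. w \<in> carrier_vec r \<Longrightarrow> transpose_mat R *\<^sub>v w = 0\<^sub>v n \<Longrightarrow> w = 0\<^sub>v r"
    and rows: "\<And>j. j < s \<Longrightarrow> \<exists>w\<in>carrier_vec r. row N j = transpose_mat R *\<^sub>v w"
    and nul: "\<And>u. u \<in> carrier_vec n \<Longrightarrow> N *\<^sub>v u = 0\<^sub>v s \<Longrightarrow> R *\<^sub>v u = 0\<^sub>v r"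
  shows "transpose_mat N * pinv (N * transpose_mat N) * N
       = transpose_mat R * the (mat_inverse (R * transpose_mat R)) * R"
proof -
  obtain Gi where Gi: "mat_inverse (R * transpose_mat R) = Some Gi" "Gi \<in> carrier_mat r r"
    "R * transpose_mat R * Gi = 1\<^sub>m r" "Gi * (R * transpose_mat R) = 1\<^sub>m r" "transpose_mat Gi = Gi"
    using gram_inverse[OF R injR] by blast
  define C where "C = N * (transpose_mat R * Gi)"
  have C: "C \<in> carrier_mat s r" using N R Gi C_def by simp
  have CR: "C * R = N" unfolding C_def by (rule rows_in_span_factor[OF R N Gi(2,4,5) rows])
  have "v = 0\<^sub>v r" if "v \<in> carrier_vec r" "C *\<^sub>v v = 0\<^sub>v s" for v
    by (rule factor_mult_vec_inj[OF R C Gi(2,3) _ that]) (use nul CR in auto)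
  then show ?thesis
    using transpose_pinv_gram_factor[OF C R Gi(2,3,4)] CR Gi(1) by simp
qed

section \<open>The projection onto \<open>D\<close> and the index sets \<open>K\<close>\<close>

lemma eproj_polyD_kkt_point:
  assumes A: "A \<in> carrier_mat m n" and B: "B \<in> carrier_mat p n" and r: "vec_space.rank p B = p"
    and d: "d \<in> carrier_vec p" and D: "polyD n A b B d \<noteq> {}" and x: "x \<in> carrier_vec n"
  obtains c where
    "kkt_point n (stack_row A B m) (stack_rhs b d m) {0..<m} {m..<m+p} x (eproj (polyD n A b B d) x) c"
    "lin_indep_on n (stack_row A B m) ({i\<in>{0..<m}. c i \<noteq> 0} \<union> {m..<m+p})"
proof -
  have ac: "\<forall>i. stack_row A B m i \<in> carrier_vec n" by (rule stack_row_carrier[OF A B])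
  note D_eq = polyD_eq_feasible[OF A B d]
  obtain q where "feasible n (stack_row A B m) (stack_rhs b d m) {0..<m} {m..<m+p} q"
    using D unfolding D_eq by auto
  then obtain y c0 where "kkt_point n (stack_row A B m) (stack_rhs b d m) {0..<m} {m..<m+p} x y c0"
    using exists_kkt_point[OF _ _ ac x] by blast
  moreover obtain c where "kkt_point n (stack_row A B m) (stack_rhs b d m) {0..<m} {m..<m+p} x y c"
    "lin_indep_on n (stack_row A B m) ({i\<in>{0..<m}. c i \<noteq> 0} \<union> {m..<m+p})"
    using exists_kkt_point_lin_indep_support[OF _ _ _ lin_indep_on_stack_row_B[OF B r] calculation] by auto
  moreover have "eproj (polyD n A b B d) x = y"
    unfolding D_eq using eproj_kkt_point[OF _ _ ac x calculation(2)] by simp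
  ultimately show ?thesis using that by blast
qed

lemma actI_eq_active:
  assumes "A \<in> carrier_mat m n"
  shows "actI n A b B d x = {i\<in>{0..<m}.
    stack_row A B m i \<bullet> eproj (polyD n A b B d) x = stack_rhs b d m i}"
  using assms unfolding actI_def by (auto simp: stack_row_def stack_rhs_def)

lemma kkt_point_in_multM:
  assumes A: "A \<in> carrier_mat m n" and B: "B \<in> carrier_mat p n" and b: "b \<in> carrier_vec m"
    and d: "d \<in> carrier_vec p" and x: "x \<in> carrier_vec n"
    and k: "kkt_point n (stack_row A B m) (stack_rhs b d m) {0..<m} {m..<m+p} x (eproj (polyD n A b B d) x) c"
  shows "(vec m c, vec p (\<lambda>k. c (m + k))) \<in> multM n A b B d x"
proof -
  define y where "y = eproj (polyD n A b B d) x"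
  have fy: "feasible n (stack_row A B m) (stack_rhs b d m) {0..<m} {m..<m+p} y"
    and xy: "x - y = lin_comb n (stack_row A B m) c ({0..<m} \<union> {m..<m+p})"
    and sign: "\<forall>i\<in>{0..<m}. c i \<le> 0 \<and> (c i \<noteq> 0 \<longrightarrow> stack_row A B m i \<bullet> y = stack_rhs b d m i)"
    using k unfolding kkt_point_def y_def by auto
  have y: "y \<in> carrier_vec n" and yD: "y \<in> polyD n A b B d"
    using fy polyD_eq_feasible[OF A B d] unfolding feasible_def by auto
  define lam where "lam = vec m c"
  define mu where "mu = vec p (\<lambda>k. c (m + k))"
  have xy': "x - y = transpose_mat A *\<^sub>v lam + transpose_mat B *\<^sub>v mu"
    unfolding xy lam_def mu_def by (rule lin_comb_stack_row[OF A B])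
  have stat: "y - x + transpose_mat A *\<^sub>v lam + transpose_mat B *\<^sub>v mu = 0\<^sub>v n"
  proof (rule eq_vecI)
    fix l assume "l < dim_vec (0\<^sub>v n)"
    then have l: "l < n" by simp
    have "(x - y) $ l = (transpose_mat A *\<^sub>v lam + transpose_mat B *\<^sub>v mu) $ l" by (simp only: xy')
    then show "(y - x + transpose_mat A *\<^sub>v lam + transpose_mat B *\<^sub>v mu) $ l = 0\<^sub>v n $ l"
      using A B x y l by simp
  qed (use A B y in simp)
  have compl: "lam \<bullet> (A *\<^sub>v y - b) = 0"
  proof -
    have "lam \<bullet> (A *\<^sub>v y - b) = (\<Sum>i\<in>{0..<m}. c i * (row A i \<bullet> y - b $ i))"
      using A b y unfolding lam_def by (simp add: scalar_prod_def)
    also have "\<dots> = 0"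
      using sign by (intro sum.neutral) (auto simp: stack_row_def stack_rhs_def)
    finally show ?thesis .
  qed
  show ?thesis
    unfolding multM_def Let_def y_def[symmetric] lam_def[symmetric] mu_def[symmetric]
  proof (intro CollectI case_prodI conjI allI impI)
    show "lam \<in> carrier_vec (dim_row A)" "mu \<in> carrier_vec (dim_row B)"
      using A B lam_def mu_def by auto
    show "\<And>i. i < dim_row A \<Longrightarrow> b $ i \<le> (A *\<^sub>v y) $ i" "B *\<^sub>v y = d"
      using yD unfolding polyD_def by auto
    show "\<And>i. i < dim_row A \<Longrightarrow> lam $ i \<le> 0" using sign A unfolding lam_def by auto
  qed (fact stat compl)+
qed

lemma row_stacked_in_span:
  assumes A: "A \<in> carrier_mat m n" and B: "B \<in> carrier_mat p n"
    and K: "K \<subseteq> {..<m}" and I: "I \<subseteq> {..<m}"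
    and span: "\<forall>i\<in>I. \<exists>w. stack_row A B m i = lin_comb n (stack_row A B m) w (K \<union> {m..<m+p})"
    and j: "j < card I + p"
  shows "\<exists>w\<in>carrier_vec (card K + p). row (rowsub A I @\<^sub>r B) j = transpose_mat (rowsub A K @\<^sub>r B) *\<^sub>v w"
proof -
  have "stack_idx m I j \<in> I \<union> {m..<m+p}" by (rule stack_idx_in[OF j])
  then obtain w where w: "stack_row A B m (stack_idx m I j) = lin_comb n (stack_row A B m) w (K \<union> {m..<m+p})"
  proof
    assume "stack_idx m I j \<in> I" then show ?thesis using span that by blast
  next
    assume "stack_idx m I j \<in> {m..<m+p}"
    then have "lin_comb n (stack_row A B m) (\<lambda>l. if l = stack_idx m I j then 1 else 0) (K \<union> {m..<m+p})
        = stack_row A B m (stack_idx m I j)"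
      using finite_subset[OF K] stack_row_carrier[OF A B] by (intro lin_comb_delta) auto
    then show ?thesis using that by metis
  qed
  then show ?thesis
    using row_stacked[OF A B I j] transpose_stacked_mult_vec[OF A B K, of w]
    by (intro bexI[of _ "vec (card K + p) (\<lambda>j. w (stack_idx m K j))"]) auto
qed

lemma stacked_mult_vec_eq_0_mono:
  assumes A: "A \<in> carrier_mat m n" and B: "B \<in> carrier_mat p n"
    and KI: "K \<subseteq> I" and I: "I \<subseteq> {..<m}"
    and z: "(rowsub A I @\<^sub>r B) *\<^sub>v u = 0\<^sub>v (card I + p)"
  shows "(rowsub A K @\<^sub>r B) *\<^sub>v u = 0\<^sub>v (card K + p)"
proof (rule eq_vecI)
  have K: "K \<subseteq> {..<m}" using KI I by auto
  fix j assume "j < dim_vec (0\<^sub>v (card K + p))"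
  then have j: "j < card K + p" by simp
  define i where "i = stack_idx m K j"
  have "i \<in> I \<union> {m..<m+p}" using stack_idx_in[OF j] KI unfolding i_def by auto
  then have "stack_pos m I i < card I + p" "stack_idx m I (stack_pos m I i) = i"
    using stack_pos_less[OF I] stack_idx_pos[OF I] by auto
  then have "stack_row A B m i \<bullet> u = 0"
    using z stacked_mult_vec_index[OF A B I, of "stack_pos m I i" u] by simp
  then show "((rowsub A K @\<^sub>r B) *\<^sub>v u) $ j = 0\<^sub>v (card K + p) $ j"
    using stacked_mult_vec_index[OF A B K j] j unfolding i_def by simp
qed (use stacked_carrier[OF A B] KI I in auto)

lemma projector_stacked_eq:
  assumes A: "A \<in> carrier_mat m n" and B: "B \<in> carrier_mat p n"
    and KI: "K \<subseteq> I" and I: "I \<subseteq> {..<m}"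
    and indK: "lin_indep_on n (stack_row A B m) (K \<union> {m..<m+p})"
    and span: "\<forall>i\<in>I. \<exists>w. stack_row A B m i = lin_comb n (stack_row A B m) w (K \<union> {m..<m+p})"
  shows "transpose_mat (rowsub A I @\<^sub>r B) * pinv ((rowsub A I @\<^sub>r B) * transpose_mat (rowsub A I @\<^sub>r B))
           * (rowsub A I @\<^sub>r B)
       = transpose_mat (rowsub A K @\<^sub>r B) * the (mat_inverse ((rowsub A K @\<^sub>r B) * transpose_mat (rowsub A K @\<^sub>r B)))
           * (rowsub A K @\<^sub>r B)"
proof (rule projector_pinv_eq_inverse)
  have K: "K \<subseteq> {..<m}" using KI I by auto
  show "rowsub A K @\<^sub>r B \<in> carrier_mat (card K + p) n" by (rule stacked_carrier[OF A B K])
  show "rowsub A I @\<^sub>r B \<in> carrier_mat (card I + p) n" by (rule stacked_carrier[OF A B I])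
  show "w = 0\<^sub>v (card K + p)"
    if "w \<in> carrier_vec (card K + p)" "transpose_mat (rowsub A K @\<^sub>r B) *\<^sub>v w = 0\<^sub>v n" for w
    by (rule transpose_stacked_mult_vec_inj[OF A B K indK that])
  show "\<exists>w\<in>carrier_vec (card K + p). row (rowsub A I @\<^sub>r B) j = transpose_mat (rowsub A K @\<^sub>r B) *\<^sub>v w"
    if "j < card I + p" for j
    by (rule row_stacked_in_span[OF A B K I span that])
  show "(rowsub A K @\<^sub>r B) *\<^sub>v u = 0\<^sub>v (card K + p)"
    if "u \<in> carrier_vec n" "(rowsub A I @\<^sub>r B) *\<^sub>v u = 0\<^sub>v (card I + p)" for u
    by (rule stacked_mult_vec_eq_0_mono[OF A B KI I that(2)])
qed

lemma idxD_memI: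
  assumes A: "A \<in> carrier_mat m n" and B: "B \<in> carrier_mat p n" and b: "b \<in> carrier_vec m"
    and d: "d \<in> carrier_vec p" and x: "x \<in> carrier_vec n"
    and kkt: "kkt_point n (stack_row A B m) (stack_rhs b d m) {0..<m} {m..<m+p} x
      (eproj (polyD n A b B d) x) c"
    and supp: "{i\<in>{0..<m}. c i \<noteq> 0} \<subseteq> K" and KI: "K \<subseteq> actI n A b B d x"
    and indK: "lin_indep_on n (stack_row A B m) (K \<union> {m..<m+p})"
  shows "K \<in> idxD n A b B d x"
  unfolding idxD_def mem_Collect_eq
proof (intro conjI)
  have K: "K \<subseteq> {..<m}" using KI A unfolding actI_def by auto
  then show "K \<subseteq> {0..<dim_row A}" using A by auto
  have "supp_vec (vec m c) \<subseteq> K" using supp unfolding supp_vec_def by auto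
  then show "\<exists>(lam, mu)\<in>multM n A b B d x. supp_vec lam \<subseteq> K \<and> K \<subseteq> actI n A b B d x"
    using kkt_point_in_multM[OF A B b d x kkt] KI by blast
  show "full_col_rank (transpose_mat (rowsub A K @\<^sub>r B))" by (rule full_col_rank_stacked[OF A B K indK])
qed

theorem theorem2p3:
  fixes m n p :: nat and A B :: "real mat" and b d x :: "real vec"
  assumes "A \<in> carrier_mat m n" and "B \<in> carrier_mat p n"
    and "vec_space.rank p B = p" and "p \<le> n"
    and "b \<in> carrier_vec m" and "d \<in> carrier_vec p"
    and "polyD n A b B d \<noteq> {}"
    and "x \<in> carrier_vec n"
  shows "1\<^sub>m n - transpose_mat (rowsub A (actI n A b B d x) @\<^sub>r B)
           * pinv ((rowsub A (actI n A b B d x) @\<^sub>r B) * transpose_mat (rowsub A (actI n A b B d x) @\<^sub>r B))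
           * (rowsub A (actI n A b B d x) @\<^sub>r B)
         \<in> projP n A b B d x"
proof -
  note A = assms(1) and B = assms(2)
  define I where "I = actI n A b B d x"
  obtain c where kkt: "kkt_point n (stack_row A B m) (stack_rhs b d m) {0..<m} {m..<m+p} x
      (eproj (polyD n A b B d) x) c"
    and indT: "lin_indep_on n (stack_row A B m) ({i\<in>{0..<m}. c i \<noteq> 0} \<union> {m..<m+p})"
    using eproj_polyD_kkt_point[OF A B assms(3,6,7,8)] by blast
  have I: "I = {i\<in>{0..<m}. stack_row A B m i \<bullet> eproj (polyD n A b B d) x = stack_rhs b d m i}"
    unfolding I_def by (rule actI_eq_active[OF A])
  then have I_sub: "I \<subseteq> {..<m}" and disj: "I \<inter> {m..<m+p} = {}" by auto
  have "{i\<in>{0..<m}. c i \<noteq> 0} \<subseteq> I" using kkt unfolding I kkt_point_def by auto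
  then obtain K where K: "{i\<in>{0..<m}. c i \<noteq> 0} \<subseteq> K" "K \<subseteq> I"
    and indK: "lin_indep_on n (stack_row A B m) (K \<union> {m..<m+p})"
    and span: "\<forall>i\<in>I. \<exists>w. stack_row A B m i = lin_comb n (stack_row A B m) w (K \<union> {m..<m+p})"
    by (rule lin_indep_on_extend_spanning[OF finite_subset[OF I_sub finite_lessThan]
          finite_atLeastLessThan stack_row_carrier[OF A B] _ indT disj])
  have "K \<in> idxD n A b B d x"
    using idxD_memI[OF A B assms(5,6,8) kkt K(1) _ indK] K(2) unfolding I_def by blast
  then show ?thesis
    unfolding projP_def I_def[symmetric] projector_stacked_eq[OF A B K(2) I_sub indK span] by blast
qed

end
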